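(* Let $k,r,s\in\mathbb{N}$ and $C>1$ with $2\leq k\leq r$, and suppose $p=p(n)\geq Cn^{-2/k}$. Suppose that $\underline{\bm{H}}$ is such that: 1. $\underline{\bm{H}}\in\bm{H_1}(r\times s)$ if $r/k\in\mathbb{N}$; 2. $\underline{\bm{H}}\in\bm{H_2}(r\times s)$ if $r/k\notin\mathbb{N}$ and $k<r/2$; 3. $\underline{\bm{H}}\in\bm{{\mathcal H}_3}(r\times s)$ if $r/2<k<r$. Then if $F$ is an $(\overline{\underline{\bm{H}}},\overline{H_{\mathrm{det}}})$-absorbing gadget with base set $W$ of size $s$, we have $\Phi_{F\setminus W}\geq Cn$ and $\Phi_{F,W}\geq Cn^{1/k}$.
   Context: Let $r^*:=\lceil r/k\rceil$ and $q:=r-k(r^*-1)$ (so $0<q\le k$). $H_{\mathrm{det}}$ is the complete $r^*$-partite graph with $r^*-1$ parts of size $k$ and one of size $q$; $\overline{H_{\mathrm{det}}}$ is the graph on the same $r$ vertices whose edges are exactly the pairs not in $H_{\mathrm{det}}$. For an $(r+1)$-vertex graph $H$ with distinguished ordered pair $(w_1,w_2)$, $\overline{H}$ is the graph on the same vertex set (same distinguished pair) whose edges are all pairs other than $w_1w_2$ that are not edges of $H$. For a vector $\bm{H}=(H^1,\dots,H^t)$, $\overline{\bm{H}}:=(\overline{H^1},\dots,\overline{H^t})$, and for a family $\underline{\bm{H}}=\{\bm{H}_{i,j}\}$, $\overline{\underline{\bm{H}}}:=\{\overline{\bm{H}_{i,j}}\}$. Specific vectors: (Case $r/k\in\mathbb{N}$)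 with $r^*=r/k$, $H_1$ is the complete $(r^*+1)$-partite graph with $r^*$ parts of size $k$ and one part $\{w_1\}$ of size $1$, minus the edge $w_1w_2$ where $w_2$ is a vertex of a part of size $k$, with distinguished pair $(w_1,w_2)$; $H_1'$ is the same graph with distinguished pair $(w_2,w_1)$; $\bm{H_1}:=(H_1,H_1')$. (Case $r/k\notin\mathbb{N}$, $k<r/2$) $H_0$ is the complete $r^*$-partite graph with $r^*-1$ parts of size $k$ and one of size $q+1$, distinguished pair two vertices of the part of size $q+1$; $H_0'$ is the same graph with distinguished pair in two different parts of size $k$; $\bm{H_2}:=(H_0,H_0',H_0',H_0)$. (Case $r/2<k<r$) with $q=r-k$ and $c:=\lceil r/q\rceil$, $H_0:=K_{k,q+1}$ with distinguished pair two vertices of the part of size $q+1$, $H_0':=K_{k,q+1}$ with first distinguished vertex in the part of size $k$ and second in the part of size $q+1$; $\bm{{\mathcal H}_3}$ is the set of vectors $\bm{H}\in\{H_0,H_0'\}^t$ with $3\leq t\leq c(2^{c+1}+1)$, first and last entries $H_0$, and some entry in positions $2,\dots,t-1$ equal to $H_0'$. For a set $\bm{{\mathcal H}}$ of vectors (or a single vector, regarded as a one-element set), $\bm{{\mathcal H}}(r\times s)$ is the set of labelled families $\{\bm{H}_{i,j}:i\in[r],j\in[s]\}$ with all $\bm{H}_{i,j}\in\bm{{\mathcal H}}$. Paths and gadgets: an $\bm{H}$-path for $\bm{H}=(H^1,\dots,H^t)$ is obtained from disjoint copies of the $H^i$ by identifying the second distinguished vertex of $H^i$ with the first of $H^{i+1}$;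 endpoints are the first distinguished vertex of $H^1$ and second of $H^t$. For an $r$-vertex graph $H$ and $\{\bm{H}_{i,j}:i\in[r],j\in[s]\}$, an $(\underline{\bm{H}},H)$-absorbing gadget is obtained by taking disjoint $\bm{H}_{i,j}$-paths with first endpoint $u_{i,j}$ and last endpoint $v_{i,j}$, placing a copy of $H$ on $\{v_{i,j}:i\in[r]\}$ for each $j$, identifying $u_{i,1},\dots,u_{i,s}$ into one vertex for each $2\le i\le r$, and renaming $u_{1,j}$ as $w_j$; the base set is $W=\{w_1,\dots,w_s\}$. $\Phi$: for a graph $F$ and $W\subseteq V(F)$ spanning no edges, $\Phi_{F,W}=\min\{n^{v_H-|V(H)\cap W|}p^{e_H}:H\subseteq F,e_H>0\}$, and $\Phi_{F}=\Phi_{F,\emptyset}$. *)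

theory Defs
  imports Complex_Main
begin

text \<open>A graph is a pair (vertex set, edge set); edges are 2-element sets.
  A rooted graph additionally carries an ordered distinguished pair (w1,w2).\<close>

type_synonym 'a graph = "'a set \<times> 'a set set"
type_synonym 'a rgraph = "'a graph \<times> 'a \<times> 'a"

definition wf_graph :: "'a graph \<Rightarrow> bool" where
  "wf_graph G \<longleftrightarrow> finite (fst G) \<and>
     (\<forall>e\<in>snd G. \<exists>x y. x \<noteq> y \<and> x \<in> fst G \<and> y \<in> fst G \<and> e = {x, y})"

definition graph_iso :: "'a graph \<Rightarrow> 'b graph \<Rightarrow> ('a \<Rightarrow> 'b) \<Rightarrow> bool" where
  "graph_iso F G f \<longleftrightarrow> bij_betw f (fst F) (fst G) \<and>
     (\<forall>x\<in>fst F. \<forall>y\<in>fst F. {x, y} \<in> snd F \<longleftrightarrow> {f x, f y} \<in> snd G)"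

text \<open>Complete multipartite graph with parts of the given sizes; vertex (i,j) is the
  j-th vertex of part i.\<close>
definition complete_multipartite :: "nat list \<Rightarrow> (nat \<times> nat) graph" where
  "complete_multipartite ps =
     (let V = {(i, j). i < length ps \<and> j < ps ! i}
      in (V, {{x, y} | x y. x \<in> V \<and> y \<in> V \<and> fst x \<noteq> fst y}))"

definition gcompl :: "'a graph \<Rightarrow> 'a graph" where
  "gcompl G = (fst G, {{x, y} | x y. x \<in> fst G \<and> y \<in> fst G \<and> x \<noteq> y \<and> {x, y} \<notin> snd G})"

definition rcompl :: "'a rgraph \<Rightarrow> 'a rgraph" where
  "rcompl R = (case R of (G, w1, w2) \<Rightarrow>
     ((fst G, {{x, y} | x y. x \<in> fst G \<and> y \<in> fst G \<and> x \<noteq> y \<and> {x, y} \<noteq> {w1, w2}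
                              \<and> {x, y} \<notin> snd G}), w1, w2))"

definition rstar :: "nat \<Rightarrow> nat \<Rightarrow> nat" where
  "rstar r k = nat \<lceil>real r / real k\<rceil>"

definition qq :: "nat \<Rightarrow> nat \<Rightarrow> nat" where
  "qq r k = r - k * (rstar r k - 1)"

definition Hdet :: "nat \<Rightarrow> nat \<Rightarrow> (nat \<times> nat) graph" where
  "Hdet r k = complete_multipartite (replicate (rstar r k - 1) k @ [qq r k])"

definition H1 :: "nat \<Rightarrow> nat \<Rightarrow> (nat \<times> nat) rgraph" where
  "H1 r k = (let m = r div k; G = complete_multipartite (replicate m k @ [1]);
                 w1 = (m, 0); w2 = (0, 0)
             in ((fst G, snd G - {{w1, w2}}), w1, w2))"

definition H1' :: "nat \<Rightarrow> nat \<Rightarrow> (nat \<times> nat) rgraph" where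
  "H1' r k = (case H1 r k of (G, w1, w2) \<Rightarrow> (G, w2, w1))"

definition vecH1 :: "nat \<Rightarrow> nat \<Rightarrow> (nat \<times> nat) rgraph list set" where
  "vecH1 r k = {[H1 r k, H1' r k]}"

definition H0_2 :: "nat \<Rightarrow> nat \<Rightarrow> (nat \<times> nat) rgraph" where
  "H0_2 r k = (complete_multipartite (replicate (rstar r k - 1) k @ [qq r k + 1]),
               (rstar r k - 1, 0), (rstar r k - 1, 1))"

definition H0'_2 :: "nat \<Rightarrow> nat \<Rightarrow> (nat \<times> nat) rgraph" where
  "H0'_2 r k = (complete_multipartite (replicate (rstar r k - 1) k @ [qq r k + 1]),
                (0, 0), (1, 0))"

definition vecH2 :: "nat \<Rightarrow> nat \<Rightarrow> (nat \<times> nat) rgraph list set" where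
  "vecH2 r k = {[H0_2 r k, H0'_2 r k, H0'_2 r k, H0_2 r k]}"

text \<open>Case r/2 < k < r; q = r - k, K_{k,q+1} has part 0 of size k and part 1 of size q+1.\<close>
definition H0_3 :: "nat \<Rightarrow> nat \<Rightarrow> (nat \<times> nat) rgraph" where
  "H0_3 r k = (complete_multipartite [k, r - k + 1], (1, 0), (1, 1))"

definition H0'_3 :: "nat \<Rightarrow> nat \<Rightarrow> (nat \<times> nat) rgraph" where
  "H0'_3 r k = (complete_multipartite [k, r - k + 1], (0, 0), (1, 0))"

definition cc :: "nat \<Rightarrow> nat \<Rightarrow> nat" where
  "cc r k = nat \<lceil>real r / real (r - k)\<rceil>"

definition vecH3 :: "nat \<Rightarrow> nat \<Rightarrow> (nat \<times> nat) rgraph list set" where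
  "vecH3 r k = {hs. 3 \<le> length hs \<and> length hs \<le> cc r k * (2 ^ (cc r k + 1) + 1)
                   \<and> set hs \<subseteq> {H0_3 r k, H0'_3 r k}
                   \<and> hd hs = H0_3 r k \<and> last hs = H0_3 r k
                   \<and> (\<exists>l. 1 \<le> l \<and> l < length hs - 1 \<and> hs ! l = H0'_3 r k)}"

text \<open>Labelled families \<open>\<H>(r \<times> s)\<close> (indices 0-based: i < r, j < s).\<close>
definition fam_set :: "'x set \<Rightarrow> nat \<Rightarrow> nat \<Rightarrow> (nat \<Rightarrow> nat \<Rightarrow> 'x) set" where
  "fam_set S r s = {fam. \<forall>i<r. \<forall>j<s. fam i j \<in> S}"

text \<open>The H-path: copy l has vertices (l,v); the second distinguished vertex of copy l
  is identified with the first distinguished vertex of copy l+1.\<close>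
definition path_lab :: "'a rgraph list \<Rightarrow> nat \<Rightarrow> 'a \<Rightarrow> nat \<times> 'a" where
  "path_lab hs l v = (if Suc l < length hs \<and> v = snd (snd (hs ! l))
                      then (Suc l, fst (snd (hs ! Suc l))) else (l, v))"

definition path_graph :: "'a rgraph list \<Rightarrow> (nat \<times> 'a) graph" where
  "path_graph hs = ((\<Union>l<length hs. path_lab hs l ` fst (fst (hs ! l))),
                    (\<Union>l<length hs. (image (path_lab hs l)) ` snd (fst (hs ! l))))"

definition path_start :: "'a rgraph list \<Rightarrow> nat \<times> 'a" where
  "path_start hs = (0, fst (snd (hs ! 0)))"

definition path_end :: "'a rgraph list \<Rightarrow> nat \<times> 'a" where
  "path_end hs = (length hs - 1, snd (snd (last hs)))"

text \<open>Gadget labels: vertex x of path (i,j) becomes (i,j,x), except that the first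
  endpoints u_{i,j} with i \<ge> 1 (0-based) are all identified with u_{i,0}.\<close>
definition glab :: "(nat \<Rightarrow> nat \<Rightarrow> 'a rgraph list) \<Rightarrow> nat \<Rightarrow> nat \<Rightarrow> nat \<times> 'a
                     \<Rightarrow> nat \<times> nat \<times> (nat \<times> 'a)" where
  "glab fam i j x = (if 1 \<le> i \<and> x = path_start (fam i j)
                     then (i, 0, path_start (fam i 0)) else (i, j, x))"

text \<open>The gadget; \<sigma> j is the bijection from the indices i < r onto V(H) used to place
  the copy of H on {v_{i,j} : i < r}.\<close>
definition gadget :: "(nat \<Rightarrow> nat \<Rightarrow> 'a rgraph list) \<Rightarrow> 'b graph \<Rightarrow> nat \<Rightarrow> nat
                       \<Rightarrow> (nat \<Rightarrow> nat \<Rightarrow> 'b) \<Rightarrow> (nat \<times> nat \<times> (nat \<times> 'a)) graph" where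
  "gadget fam H r s \<sigma> =
     ((\<Union>i<r. \<Union>j<s. glab fam i j ` fst (path_graph (fam i j))),
      (\<Union>i<r. \<Union>j<s. image (glab fam i j) ` snd (path_graph (fam i j))) \<union>
      (\<Union>j<s. {{glab fam i j (path_end (fam i j)), glab fam i' j (path_end (fam i' j))} | i i'.
                 i < r \<and> i' < r \<and> {\<sigma> j i, \<sigma> j i'} \<in> snd H}))"

definition gadget_base :: "(nat \<Rightarrow> nat \<Rightarrow> 'a rgraph list) \<Rightarrow> nat
                            \<Rightarrow> (nat \<times> nat \<times> (nat \<times> 'a)) set" where
  "gadget_base fam s = {glab fam 0 j (path_start (fam 0 j)) | j. j < s}"

definition is_absorbing_gadget ::
  "(nat \<Rightarrow> nat \<Rightarrow> 'a rgraph list) \<Rightarrow> 'b graph \<Rightarrow> nat \<Rightarrow> nat \<Rightarrow> 'v graph \<Rightarrow> 'v set \<Rightarrow> bool" where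
  "is_absorbing_gadget fam H r s F W \<longleftrightarrow> wf_graph F \<and>
     (\<exists>\<sigma> f. (\<forall>j<s. bij_betw (\<sigma> j) {..<r} (fst H)) \<and>
            graph_iso F (gadget fam H r s \<sigma>) f \<and> f ` W = gadget_base fam s)"

definition Phi :: "nat \<Rightarrow> real \<Rightarrow> 'v graph \<Rightarrow> 'v set \<Rightarrow> real" where
  "Phi n p F W = Min {real n ^ (card VH - card (VH \<inter> W)) * p ^ card EH | VH EH.
                        VH \<subseteq> fst F \<and> EH \<subseteq> snd F \<and> (\<forall>e\<in>EH. e \<subseteq> VH) \<and> card EH > 0}"

abbreviation Phi0 :: "nat \<Rightarrow> real \<Rightarrow> 'v graph \<Rightarrow> real" where
  "Phi0 n p F \<equiv> Phi n p F {}"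

definition delete_vertices :: "'v graph \<Rightarrow> 'v set \<Rightarrow> 'v graph" where
  "delete_vertices F W = (fst F - W, {e \<in> snd F. e \<inter> W = {}})"

end

theory Submission
  imports Defs
begin

definition sparse :: "nat \<Rightarrow> 'a set \<Rightarrow> nat \<Rightarrow> 'a set set \<Rightarrow> bool" where
  "sparse k S c E \<longleftrightarrow> finite (\<Union>E) \<and>
     (\<forall>F\<subseteq>E. F \<noteq> {} \<longrightarrow> 2 * card F + c \<le> k * card (\<Union>F - S))"

lemma sparse_empty [simp]: "sparse k S c {}"
  by (simp add: sparse_def)

lemma sparseD:
  "sparse k S c E \<Longrightarrow> F \<subseteq> E \<Longrightarrow> F \<noteq> {} \<Longrightarrow> 2 * card F + c \<le> k * card (\<Union>F - S)"
  unfolding sparse_def by blast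

lemma sparse_finite_Union: "sparse k S c E \<Longrightarrow> finite (\<Union>E)"
  unfolding sparse_def by blast

lemma sparse_finite: "sparse k S c E \<Longrightarrow> finite E"
  using sparse_finite_Union finite_UnionD by blast

lemma sparse_subset: "sparse k S c E \<Longrightarrow> E' \<subseteq> E \<Longrightarrow> sparse k S c E'"
  unfolding sparse_def by (meson Union_mono finite_subset order_trans)

lemma sparse_mono_slack: "sparse k S c E \<Longrightarrow> c' \<le> c \<Longrightarrow> sparse k S c' E"
  unfolding sparse_def by (meson add_le_mono le_refl order_trans)

lemma sparse_outside_mono:
  assumes "sparse k S c E" "S' \<inter> \<Union>E \<subseteq> S"
  shows "sparse k S' c E"
  unfolding sparse_def
proof (intro conjI allI impI)
  show "finite (\<Union>E)" using assms(1) by (rule sparse_finite_Union)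
  fix F assume F: "F \<subseteq> E" "F \<noteq> {}"
  have "finite (\<Union>F)" using F(1) sparse_finite_Union[OF assms(1)] by (meson Union_mono finite_subset)
  moreover have "\<Union>F - S \<subseteq> \<Union>F - S'" using F(1) assms(2) by blast
  ultimately have "card (\<Union>F - S) \<le> card (\<Union>F - S')" by (simp add: card_mono)
  then show "2 * card F + c \<le> k * card (\<Union>F - S')"
    using sparseD[OF assms(1) F] by (meson le_trans mult_le_mono2)
qed

text \<open>Gluing two sparse edge sets along at most \<open>d\<close> common vertices costs \<open>k * d\<close> of slack.\<close>

lemma sparse_Un:
  assumes E1: "sparse k S c1 E1" and E2: "sparse k S c2 E2"
    and overlap: "card (\<Union>E1 \<inter> \<Union>E2) \<le> d"
    and "c \<le> c1" "c \<le> c2" "c + k * d \<le> c1 + c2"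
  shows "sparse k S c (E1 \<union> E2)"
  unfolding sparse_def
proof (intro conjI allI impI)
  have fin1: "finite (\<Union>E1)" and fin2: "finite (\<Union>E2)"
    using E1 E2 by (simp_all add: sparse_finite_Union)
  then show "finite (\<Union>(E1 \<union> E2))" by simp
  fix F assume F: "F \<subseteq> E1 \<union> E2" "F \<noteq> {}"
  define F1 F2 where "F1 = F \<inter> E1" and "F2 = F - E1"
  have F12: "F = F1 \<union> F2" "F1 \<inter> F2 = {}" "F1 \<subseteq> E1" "F2 \<subseteq> E2"
    using F(1) by (auto simp: F1_def F2_def)
  have "finite F1" "finite F2"
    using F12 sparse_finite[OF E1] sparse_finite[OF E2] finite_subset by blast+
  then have card_F: "card F = card F1 + card F2"
    using F12 by (simp add: card_Un_disjoint)
  consider "F2 = {}" | "F1 = {}" | "F1 \<noteq> {}" "F2 \<noteq> {}" by blast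
  then show "2 * card F + c \<le> k * card (\<Union>F - S)"
  proof cases
    case 1
    then show ?thesis using sparseD[OF E1 F12(3)] F12(1) F(2) \<open>c \<le> c1\<close> by fastforce
  next
    case 2
    then show ?thesis using sparseD[OF E2 F12(4)] F12(1) F(2) \<open>c \<le> c2\<close> by fastforce
  next
    case 3
    let ?V1 = "\<Union>F1 - S" and ?V2 = "\<Union>F2 - S"
    have "finite ?V1" "finite ?V2"
      using F12 fin1 fin2 by (meson Diff_subset Union_mono finite_subset order_trans)+
    moreover have "?V1 \<inter> ?V2 \<subseteq> \<Union>E1 \<inter> \<Union>E2" using F12 by blast
    then have "card (?V1 \<inter> ?V2) \<le> d"
      using overlap fin1 by (meson card_mono finite_Int le_trans)
    ultimately have "card ?V1 + card ?V2 \<le> card (\<Union>F - S) + d"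
      using card_Un_Int[of ?V1 ?V2] F12(1) by (simp add: Un_Diff)
    then have "k * card ?V1 + k * card ?V2 \<le> k * card (\<Union>F - S) + k * d"
      by (metis add_mult_distrib2 mult_le_mono2)
    then show ?thesis
      using sparseD[OF E1 F12(3) 3(1)] sparseD[OF E2 F12(4) 3(2)] card_F assms(6) by linarith
  qed
qed

lemma sparse_Un_disjoint:
  assumes "sparse k S c E1" "sparse k S c E2" "\<Union>E1 \<inter> \<Union>E2 = {}"
  shows "sparse k S c (E1 \<union> E2)"
  using sparse_Un[OF assms(1,2), of 0 c] assms(3) by simp

lemma sparse_Un_cut_vertex:
  assumes "sparse k S c E1" "sparse k S k E2" "\<Union>E1 \<inter> \<Union>E2 \<subseteq> {z}" "c \<le> k"
  shows "sparse k S c (E1 \<union> E2)"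
proof (rule sparse_Un[OF assms(1,2)])
  show "card (\<Union>E1 \<inter> \<Union>E2) \<le> 1" using card_mono[OF _ assms(3)] by simp
qed (use assms(4) in simp_all)

lemma sparse_UN_disjoint:
  assumes "finite I" "\<And>i. i \<in> I \<Longrightarrow> sparse k S c (X i)"
    and "\<And>i j. i \<in> I \<Longrightarrow> j \<in> I \<Longrightarrow> i \<noteq> j \<Longrightarrow> \<Union>(X i) \<inter> \<Union>(X j) = {}"
  shows "sparse k S c (\<Union>i\<in>I. X i)"
  using assms
proof (induction I rule: finite_induct)
  case (insert i I)
  have "\<Union>(X i) \<inter> \<Union>(\<Union>i\<in>I. X i) = {}" using insert.prems(2) insert.hyps(2) by blast
  then show ?case using insert by (simp add: sparse_Un_disjoint)
qed simp

text \<open>A block attached to the rest at a single cut vertex does not change the slack.\<close>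

lemma sparse_UN_cut_vertex:
  assumes "finite I" "sparse k S c E" "c \<le> k" "\<And>i. i \<in> I \<Longrightarrow> sparse k S k (X i)"
    and "\<And>i. i \<in> I \<Longrightarrow> \<exists>z. \<Union>(X i) \<inter> (\<Union>E \<union> (\<Union>i'\<in>I - {i}. \<Union>(X i'))) \<subseteq> {z}"
  shows "sparse k S c (E \<union> (\<Union>i\<in>I. X i))"
  using assms(1,4,5)
proof (induction I rule: finite_induct)
  case empty
  then show ?case using assms(2) by simp
next
  case (insert i I)
  have "sparse k S c (E \<union> (\<Union>i\<in>I. X i))"
  proof (rule insert.IH)
    fix i' assume "i' \<in> I"
    then obtain z where "\<Union>(X i') \<inter> (\<Union>E \<union> (\<Union>i''\<in>insert i I - {i'}. \<Union>(X i''))) \<subseteq> {z}"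
      using insert.prems(2) by blast
    then show "\<exists>z. \<Union>(X i') \<inter> (\<Union>E \<union> (\<Union>i''\<in>I - {i'}. \<Union>(X i''))) \<subseteq> {z}" by blast
  next
    show "sparse k S k (X i')" if "i' \<in> I" for i' using insert.prems(1) that by blast
  qed
  obtain z where "\<Union>(X i) \<inter> (\<Union>E \<union> (\<Union>i'\<in>insert i I - {i}. \<Union>(X i'))) \<subseteq> {z}"
    using insert.prems(2) by blast
  moreover have "insert i I - {i} = I" using insert.hyps(2) by blast
  ultimately have "\<Union>(E \<union> (\<Union>i\<in>I. X i)) \<inter> \<Union>(X i) \<subseteq> {z}" by auto
  with \<open>sparse k S c (E \<union> (\<Union>i\<in>I. X i))\<close>
  have "sparse k S c ((E \<union> (\<Union>i\<in>I. X i)) \<union> X i)"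
    by (rule sparse_Un_cut_vertex[OF _ insert.prems(1)[OF insertI1] _ assms(3)])
  then show ?case by (simp add: Un_ac)
qed

lemma sparse_UN_chain:
  fixes m0 m1 :: nat
  assumes "sparse k S c (Y m0)" "c \<le> k" "\<And>l. m0 < l \<Longrightarrow> l < m1 \<Longrightarrow> sparse k S k (Y l)"
    and "\<And>l l'. l < l' \<Longrightarrow> \<Union>(Y l) \<inter> \<Union>(Y l') \<subseteq> {z l'}"
  shows "sparse k S c (\<Union>l\<in>{m0..<m1}. Y l)"
  using assms(3)
proof (induction m1)
  case (Suc m)
  consider "m < m0" | "m = m0" | "m0 < m" by linarith
  then show ?case
  proof cases
    case 1
    then show ?thesis by simp
  next
    case 2
    then show ?thesis using assms(1) by simp
  next
    case 3
    have "\<Union>(Y l) \<inter> \<Union>(Y m) \<subseteq> {z m}" if "l \<in> {m0..<m}" for l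
      using that by (intro assms(4)) simp
    then have "\<Union>(\<Union>l\<in>{m0..<m}. Y l) \<inter> \<Union>(Y m) \<subseteq> {z m}" by blast
    moreover have "sparse k S c (\<Union>l\<in>{m0..<m}. Y l)" by (rule Suc.IH) (use Suc.prems in simp)
    moreover have "sparse k S k (Y m)" by (rule Suc.prems) (use 3 in simp_all)
    ultimately have "sparse k S c ((\<Union>l\<in>{m0..<m}. Y l) \<union> Y m)"
      using assms(2) by (intro sparse_Un_cut_vertex)
    moreover have "{m0..<Suc m} = insert m {m0..<m}" using 3 by auto
    ultimately show ?thesis by (simp add: Un_ac)
  qed
qed simp

lemma sparse_embed:
  assumes E: "sparse k S c E" and inj: "inj_on f (\<Union>E')" and sub: "image f ` E' \<subseteq> E"
    and outside: "\<And>x. x \<in> \<Union>E' \<Longrightarrow> x \<in> T \<Longrightarrow> f x \<in> S"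
  shows "sparse k T c E'"
  unfolding sparse_def
proof (intro conjI allI impI)
  have "f ` \<Union>E' \<subseteq> \<Union>E" using sub by blast
  then have "finite (f ` \<Union>E')" using sparse_finite_Union[OF E] by (rule finite_subset)
  then show fin: "finite (\<Union>E')" using inj by (rule finite_imageD)
  fix F assume F: "F \<subseteq> E'" "F \<noteq> {}"
  have "inj_on (image f) F"
  proof (rule inj_onI)
    fix x y assume "x \<in> F" "y \<in> F" "f ` x = f ` y"
    moreover have "x \<subseteq> \<Union>E'" "y \<subseteq> \<Union>E'" using F(1) \<open>x \<in> F\<close> \<open>y \<in> F\<close> by blast+
    ultimately show "x = y" by (simp add: inj_on_image_eq_iff[OF inj])
  qed
  then have "card (image f ` F) = card F" by (rule card_image)
  moreover have "2 * card (image f ` F) + c \<le> k * card (\<Union>(image f ` F) - S)"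
    using F sub by (intro sparseD[OF E]) auto
  moreover have "card (\<Union>(image f ` F) - S) \<le> card (\<Union>F - T)"
  proof -
    have "\<Union>(image f ` F) - S \<subseteq> f ` (\<Union>F - T)"
    proof
      fix y assume "y \<in> \<Union>(image f ` F) - S"
      then obtain x where "x \<in> \<Union>F" "y = f x" "f x \<notin> S" by auto
      moreover have "x \<in> \<Union>E'" using F(1) \<open>x \<in> \<Union>F\<close> by blast
      ultimately show "y \<in> f ` (\<Union>F - T)" using outside by blast
    qed
    moreover have "finite (\<Union>F - T)" using finite_subset[OF Union_mono[OF F(1)] fin] by simp
    ultimately show ?thesis by (meson card_image_le card_mono finite_imageI le_trans)
  qed
  then have "k * card (\<Union>(image f ` F) - S) \<le> k * card (\<Union>F - T)" by simp
  ultimately show "2 * card F + c \<le> k * card (\<Union>F - T)" by linarith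
qed

lemma sparse_image:
  assumes E: "sparse k S c E" and inj: "inj_on g (\<Union>E)"
    and outside: "\<And>x. x \<in> \<Union>E \<Longrightarrow> g x \<in> T \<Longrightarrow> x \<in> S"
  shows "sparse k T c (image g ` E)"
proof (rule sparse_embed[OF E, where f = "inv_into (\<Union>E) g"])
  show "inj_on (inv_into (\<Union>E) g) (\<Union>(image g ` E))"
    by (rule inj_on_inv_into) blast
  have "inv_into (\<Union>E) g ` g ` e = e" if "e \<in> E" for e
    by (rule inv_into_image_cancel[OF inj]) (use that in blast)
  then show "image (inv_into (\<Union>E) g) ` image g ` E \<subseteq> E" by auto
  show "inv_into (\<Union>E) g y \<in> S" if y: "y \<in> \<Union>(image g ` E)" "y \<in> T" for y
  proof -
    obtain x where x: "x \<in> \<Union>E" "y = g x" using y(1) by blast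
    then have "inv_into (\<Union>E) g y = x" by (simp add: inv_into_f_f[OF inj])
    with x y(2) outside show ?thesis by auto
  qed
qed

lemma edge_weight_lower_bound:
  fixes n :: nat and C p :: real
  assumes "2 * e + c \<le> k * a" "1 \<le> e" "0 < k" "1 \<le> C"
    and p: "p \<ge> C * real n powr (- 2 / real k)"
  shows "real n ^ a * p ^ e \<ge> C * real n powr (real c / real k)"
proof (cases "n = 0")
  case True
  then show ?thesis using p by simp
next
  case False
  then have n: "real n \<ge> 1" by simp
  define x where "x = real n powr (real e * (- 2 / real k))"
  have "C ^ 1 \<le> C ^ e" using assms(2,4) by (rule power_increasing)
  then have "C \<le> C ^ e" by simp
  then have "C * x \<le> C ^ e * x" by (simp add: x_def mult_right_mono)
  also have "\<dots> = (C * real n powr (- 2 / k)) ^ e"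
    using n by (simp add: x_def power_mult_distrib powr_power)
  also have "\<dots> \<le> p ^ e" using p assms(4) by (simp add: power_mono)
  finally have pe: "C * x \<le> p ^ e" .
  have "real (2 * e + c) \<le> real (k * a)" using assms(1) by (rule of_nat_mono)
  then have "real c / k \<le> (real k * a - 2 * e) / k" by (simp add: divide_right_mono)
  also have "\<dots> = a + e * (- 2 / k)" using assms(3) by (simp add: field_simps)
  finally have "real n powr (c / k) \<le> real n powr (a + e * (- 2 / k))" using n by (rule powr_mono)
  also have "\<dots> = real n powr a * x" unfolding x_def by (rule powr_add)
  finally have "C * real n powr (c / k) \<le> C * (real n powr a * x)"
    using assms(4) by simp
  also have "\<dots> = real n ^ a * (C * x)" using n by (simp add: powr_realpow)
  also have "\<dots> \<le> real n ^ a * p ^ e" using pe by (simp add: mult_left_mono)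
  finally show ?thesis .
qed

lemma Phi_lower_bound:
  fixes F :: "'v graph" and n :: nat and C p :: real
  assumes E: "sparse k W c (snd F)" and fin: "finite (fst F)" and edges: "\<forall>e\<in>snd F. e \<subseteq> fst F"
    and nonempty: "snd F \<noteq> {}" and "0 < k" "1 \<le> C" "p \<ge> C * real n powr (- 2 / real k)"
  shows "Phi n p F W \<ge> C * real n powr (real c / real k)"
proof -
  define w where "w VH EH = real n ^ (card VH - card (VH \<inter> W)) * p ^ card EH" for VH :: "'v set" and EH :: "'v set set"
  define M where "M = {w VH EH | VH EH. VH \<subseteq> fst F \<and> EH \<subseteq> snd F \<and> (\<forall>e\<in>EH. e \<subseteq> VH) \<and> card EH > 0}"
  have "snd F \<subseteq> Pow (fst F)" using edges by blast
  then have "finite (snd F)" using fin finite_subset by blast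
  have "M \<subseteq> case_prod w ` (Pow (fst F) \<times> Pow (snd F))" unfolding M_def by auto
  moreover have "finite (case_prod w ` (Pow (fst F) \<times> Pow (snd F)))"
    using fin \<open>finite (snd F)\<close> by simp
  ultimately have "finite M" by (rule finite_subset)
  obtain e where "e \<in> snd F" using nonempty by blast
  then have "e \<subseteq> fst F \<and> {e} \<subseteq> snd F \<and> (\<forall>e'\<in>{e}. e' \<subseteq> e) \<and> card {e} > 0"
    using edges by simp
  then have "w e {e} \<in> M" unfolding M_def by (intro CollectI exI[of _ e] exI[of _ "{e}"]) simp
  then have "M \<noteq> {}" by blast
  have "C * real n powr (real c / real k) \<le> w VH EH"
    if H: "VH \<subseteq> fst F" "EH \<subseteq> snd F" "\<forall>e\<in>EH. e \<subseteq> VH" "card EH > 0" for VH EH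
    unfolding w_def
  proof (rule edge_weight_lower_bound)
    have "finite VH" using H(1) fin finite_subset by blast
    then have "card (\<Union>EH - W) \<le> card (VH - W)" using H(3) by (intro card_mono) auto
    also have "\<dots> = card VH - card (VH \<inter> W)" using \<open>finite VH\<close> by (simp add: card_Diff_subset_Int)
    finally have "k * card (\<Union>EH - W) \<le> k * (card VH - card (VH \<inter> W))" by simp
    moreover have "EH \<noteq> {}" using H(4) by auto
    ultimately show "2 * card EH + c \<le> k * (card VH - card (VH \<inter> W))"
      using sparseD[OF E H(2)] by linarith
  qed (use H(4) assms(5-7) in auto)
  then have "\<forall>m\<in>M. C * real n powr (real c / real k) \<le> m" unfolding M_def by blast
  then show ?thesis
    unfolding Phi_def using Min_ge_iff[OF \<open>finite M\<close> \<open>M \<noteq> {}\<close>] by (simp add: M_def w_def)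
qed

lemma two_times_choose_two: "2 * (n choose 2) = n * (n - 1)"
  by (induction n) (auto simp: choose_two algebra_simps)

lemma card_two_subsets_le:
  assumes "finite V" "F \<subseteq> {e. e \<subseteq> V \<and> card e = 2}"
  shows "2 * card F \<le> card V * (card V - 1)"
proof -
  have "card F \<le> card V choose 2"
    using card_mono[OF _ assms(2)] assms(1) by (simp add: n_subsets)
  then show ?thesis using two_times_choose_two[of "card V"] by linarith
qed

lemma card_Union_two_subsets_ge:
  assumes "finite (\<Union>F)" "\<forall>e\<in>F. card e = 2" "F \<noteq> {}"
  shows "2 \<le> card (\<Union>F)"
  using assms by (metis Union_upper all_not_in_conv card_mono)

text \<open>A clique on at most \<open>k\<close> vertices has \<open>2e \<le> v(v - 1) \<le> k(v - 1)\<close>.\<close>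

lemma sparse_clique:
  assumes "finite X" "card X \<le> k" "\<forall>e\<in>E. e \<subseteq> X \<and> card e = 2"
  shows "sparse k {} k E"
  unfolding sparse_def
proof (intro conjI allI impI)
  have "\<Union>E \<subseteq> X" using assms(3) by blast
  then show "finite (\<Union>E)" using assms(1) by (rule finite_subset)
  fix F assume F: "F \<subseteq> E" "F \<noteq> {}"
  let ?v = "card (\<Union>F)"
  have VX: "\<Union>F \<subseteq> X" using F(1) assms(3) by blast
  then have fin: "finite (\<Union>F)" using assms(1) by (rule finite_subset)
  have "?v \<le> k" using card_mono[OF assms(1) VX] assms(2) by simp
  have "2 * card F \<le> ?v * (?v - 1)"
    by (rule card_two_subsets_le[OF fin]) (use F(1) assms(3) in blast)
  moreover have "?v * (?v - 1) \<le> k * (?v - 1)" using \<open>?v \<le> k\<close> by simp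
  moreover have "2 \<le> ?v" using card_Union_two_subsets_ge[OF fin _ F(2)] F(1) assms(3) by blast
  then have "k * (?v - 1) + k = k * ?v" by (cases ?v) simp_all
  ultimately have "2 * card F + k \<le> k * ?v" by linarith
  then show "2 * card F + k \<le> k * card (\<Union>F - {})" by simp
qed

text \<open>Removing one edge \<open>ab\<close> from a clique on at most \<open>k\<close> vertices leaves slack 1 even when
  \<open>a\<close> is not counted: the full clique is the only place where \<open>2e = v(v - 1)\<close> is possible.\<close>

lemma sparse_clique_minus_edge:
  assumes "finite X" "card X \<le> k" "\<forall>e\<in>E. e \<subseteq> X \<and> card e = 2" "{a, b} \<notin> E"
    and "a \<noteq> b" "a \<in> X" "b \<in> X" "2 \<le> k"
  shows "sparse k {a} 1 E"
  unfolding sparse_def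
proof (intro conjI allI impI)
  have "\<Union>E \<subseteq> X" using assms(3) by blast
  then show "finite (\<Union>E)" using assms(1) by (rule finite_subset)
  fix F assume F: "F \<subseteq> E" "F \<noteq> {}"
  let ?V = "\<Union>F"
  let ?v = "card ?V"
  have VX: "?V \<subseteq> X" using F(1) assms(3) by blast
  then have fin: "finite ?V" using assms(1) by (rule finite_subset)
  have vk: "?v \<le> k" using card_mono[OF assms(1) VX] assms(2) by simp
  have pairs: "F \<subseteq> {e. e \<subseteq> ?V \<and> card e = 2}" using F(1) assms(3) by blast
  have e: "2 * card F \<le> ?v * (?v - 1)" by (rule card_two_subsets_le[OF fin pairs])
  have v2: "2 \<le> ?v" using card_Union_two_subsets_ge[OF fin _ F(2)] F(1) assms(3) by blast
  show "2 * card F + 1 \<le> k * card (?V - {a})"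
  proof (cases "a \<in> ?V")
    case False
    have "?v * (?v - 1) \<le> k * (?v - 1)" using vk by simp
    moreover have "k * (?v - 1) + k = k * ?v" using v2 by (cases ?v) simp_all
    moreover have "k * card (?V - {a}) = k * ?v" using False by simp
    ultimately show ?thesis using e assms(8) by linarith
  next
    case True
    then have Va: "k * card (?V - {a}) = k * (?v - 1)" using fin by simp
    show ?thesis
    proof (cases "?v < k")
      case True
      then have "?v * (?v - 1) \<le> (k - 1) * (?v - 1)" by (intro mult_right_mono) simp_all
      moreover have "k * (?v - 1) = (k - 1) * (?v - 1) + (?v - 1)" using assms(8) by (cases k) simp_all
      ultimately show ?thesis using e v2 Va by linarith
    next
      case False
      then have "?V = X" using card_subset_eq[OF assms(1) VX] card_mono[OF assms(1) VX] vk assms(2) by simp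
      then have ab: "{a, b} \<in> {e. e \<subseteq> ?V \<and> card e = 2}" using assms(5-7) by simp
      have "card F \<le> card ({e. e \<subseteq> ?V \<and> card e = 2} - {{a, b}})"
        using pairs assms(4) F(1) fin by (intro card_mono) auto
      also have "\<dots> = (?v choose 2) - 1" using ab fin by (simp add: n_subsets)
      finally have "2 * card F + 2 \<le> ?v * (?v - 1)"
        using v2 two_times_choose_two[of ?v] by (cases "?v choose 2") simp_all
      moreover have "?v = k" using False vk by simp
      ultimately have "2 * card F + 2 \<le> k * (?v - 1)" by simp
      then show ?thesis using Va by linarith
    qed
  qed
qed

definition same_part_pairs :: "nat list \<Rightarrow> (nat \<times> nat) set set" where
  "same_part_pairs ps = {{x, y} | x y. x \<in> fst (complete_multipartite ps)
     \<and> y \<in> fst (complete_multipartite ps) \<and> x \<noteq> y \<and> fst x = fst y}"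

lemma fst_complete_multipartite:
  "fst (complete_multipartite ps) = {(i, j). i < length ps \<and> j < ps ! i}"
  by (simp add: complete_multipartite_def Let_def)

lemma snd_complete_multipartite:
  "snd (complete_multipartite ps) = {{x, y} | x y. x \<in> fst (complete_multipartite ps)
     \<and> y \<in> fst (complete_multipartite ps) \<and> fst x \<noteq> fst y}"
  by (simp add: complete_multipartite_def Let_def)

lemma rcompl_Diff_root_edge: "rcompl ((V, E - {{a, b}}), a, b) = rcompl ((V, E), a, b)"
  by (auto simp: rcompl_def)

lemma fst_fst_rcompl: "fst (fst (rcompl R)) = fst (fst R)"
  by (simp add: rcompl_def split: prod.split)

lemma snd_rcompl: "snd (rcompl R) = snd R"
  by (simp add: rcompl_def split: prod.split)

lemma doubleton_in_snd_complete_multipartite: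
  assumes "x \<in> fst (complete_multipartite ps)" "y \<in> fst (complete_multipartite ps)"
  shows "{x, y} \<in> snd (complete_multipartite ps) \<longleftrightarrow> fst x \<noteq> fst y"
proof
  assume "{x, y} \<in> snd (complete_multipartite ps)"
  then obtain x' y' where "{x, y} = {x', y'}" "fst x' \<noteq> fst y'"
    unfolding snd_complete_multipartite by blast
  then show "fst x \<noteq> fst y" by (auto simp: doubleton_eq_iff)
qed (use assms in \<open>unfold snd_complete_multipartite, blast\<close>)

lemma edges_rcompl_complete_multipartite:
  "snd (fst (rcompl (complete_multipartite ps, a, b))) \<subseteq> same_part_pairs ps - {{a, b}}"
proof
  fix e assume "e \<in> snd (fst (rcompl (complete_multipartite ps, a, b)))"
  then obtain x y where e: "e = {x, y}" "x \<in> fst (complete_multipartite ps)"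
    "y \<in> fst (complete_multipartite ps)" "x \<noteq> y" "e \<noteq> {a, b}" "{x, y} \<notin> snd (complete_multipartite ps)"
    unfolding rcompl_def by simp blast
  then have "fst x = fst y" using doubleton_in_snd_complete_multipartite by blast
  with e show "e \<in> same_part_pairs ps - {{a, b}}" unfolding same_part_pairs_def by blast
qed

lemma edges_gcompl_complete_multipartite:
  "snd (gcompl (complete_multipartite ps)) \<subseteq> same_part_pairs ps"
proof
  fix e assume "e \<in> snd (gcompl (complete_multipartite ps))"
  then obtain x y where e: "e = {x, y}" "x \<in> fst (complete_multipartite ps)"
    "y \<in> fst (complete_multipartite ps)" "x \<noteq> y" "{x, y} \<notin> snd (complete_multipartite ps)"
    unfolding gcompl_def by simp blast
  then have "fst x = fst y" using doubleton_in_snd_complete_multipartite by blast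
  with e show "e \<in> same_part_pairs ps" unfolding same_part_pairs_def by blast
qed

lemma same_part_pairsD:
  "e \<in> same_part_pairs ps \<Longrightarrow> z \<in> e \<Longrightarrow> z' \<in> e \<Longrightarrow> fst z = fst z'"
  unfolding same_part_pairs_def by auto

lemma same_part_pairs_edge:
  "e \<in> same_part_pairs ps \<Longrightarrow> e \<subseteq> fst (complete_multipartite ps) \<and> card e = 2"
  unfolding same_part_pairs_def by auto

lemma finite_part: "finite {z \<in> fst (complete_multipartite ps). fst z = p}"
  unfolding fst_complete_multipartite by (rule finite_subset[of _ "{p} \<times> {..<ps ! p}"]) auto

lemma card_part_le:
  assumes "\<forall>p<length ps. ps ! p \<le> k"
  shows "card {z \<in> fst (complete_multipartite ps). fst z = p} \<le> k"
proof -
  have "{z \<in> fst (complete_multipartite ps). fst z = p} = (if p < length ps then {p} \<times> {..<ps ! p} else {})"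
    unfolding fst_complete_multipartite by auto
  then show ?thesis using assms by simp
qed

lemma sparse_same_part_pairs:
  assumes parts: "\<forall>p<length ps. ps ! p \<le> k" and E: "E \<subseteq> same_part_pairs ps"
  shows "sparse k {} k E"
proof -
  define X where "X p = {e \<in> E. \<forall>z\<in>e. fst z = p}" for p
  have "sparse k {} k (\<Union>p<length ps. X p)"
  proof (rule sparse_UN_disjoint)
    fix p
    let ?part = "{z \<in> fst (complete_multipartite ps). fst z = p}"
    have "\<forall>e\<in>X p. e \<subseteq> ?part \<and> card e = 2"
      using E same_part_pairs_edge unfolding X_def by blast
    with finite_part show "sparse k {} k (X p)" by (rule sparse_clique[OF _ card_part_le[OF parts]])
  next
    show "\<Union>(X p) \<inter> \<Union>(X p') = {}" if "p \<noteq> p'" for p p'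
      using that unfolding X_def by force
  qed simp
  moreover have "E = (\<Union>p<length ps. X p)"
  proof
    show "E \<subseteq> (\<Union>p<length ps. X p)"
    proof
      fix e assume "e \<in> E"
      then obtain x y where "e = {x, y}" "x \<in> fst (complete_multipartite ps)" "fst x = fst y"
        using E unfolding same_part_pairs_def by blast
      then show "e \<in> (\<Union>p<length ps. X p)"
        using \<open>e \<in> E\<close> unfolding X_def fst_complete_multipartite by auto
    qed
  qed (auto simp: X_def)
  ultimately show ?thesis by simp
qed

lemma same_part_pairs_other_part:
  assumes E: "E \<subseteq> same_part_pairs ps" and z: "z \<in> \<Union>(E - {e \<in> E. \<forall>z\<in>e. fst z = p})"
  shows "fst z \<noteq> p"
proof -
  obtain e where "z \<in> e" "e \<in> E" "\<not> (\<forall>z\<in>e. fst z = p)" using z by blast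
  then obtain z' where "z \<in> e" "e \<in> E" "z' \<in> e" "fst z' \<noteq> p" by blast
  then show ?thesis using subsetD[OF E] same_part_pairsD[of e ps z z'] by simp
qed

lemma sparse_same_part_pairs_minus_edge:
  assumes parts: "\<forall>p<length ps. ps ! p \<le> k" and k: "2 \<le> k"
    and E: "E \<subseteq> same_part_pairs ps - {{a, b}}"
    and ab: "a \<noteq> b" "a \<in> fst (complete_multipartite ps)" "b \<in> fst (complete_multipartite ps)"
      "fst a = fst b"
  shows "sparse k {a} 1 E"
proof -
  let ?part = "{z \<in> fst (complete_multipartite ps). fst z = fst a}"
  define EA where "EA = {e \<in> E. \<forall>z\<in>e. fst z = fst a}"
  have "\<forall>e\<in>EA. e \<subseteq> ?part \<and> card e = 2"
  proof
    fix e assume "e \<in> EA"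
    then have "e \<in> same_part_pairs ps" "\<forall>z\<in>e. fst z = fst a" using E unfolding EA_def by auto
    then show "e \<subseteq> ?part \<and> card e = 2" using same_part_pairs_edge by blast
  qed
  moreover have "{a, b} \<notin> EA" using E unfolding EA_def by blast
  ultimately have A: "sparse k {a} 1 EA"
    by (rule sparse_clique_minus_edge[OF finite_part card_part_le[OF parts]]) (use ab k in simp_all)
  have other: "fst z \<noteq> fst a" if "z \<in> \<Union>(E - EA)" for z
    using same_part_pairs_other_part E that unfolding EA_def by blast
  have "sparse k {} k (E - EA)" by (rule sparse_same_part_pairs[OF parts]) (use E in blast)
  then have "sparse k {a} k (E - EA)" by (rule sparse_outside_mono) (use other in blast)
  then have B: "sparse k {a} 1 (E - EA)" by (rule sparse_mono_slack) (use k in simp)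
  have "fst z = fst a" if "z \<in> \<Union>EA" for z using that unfolding EA_def by blast
  then have "\<Union>EA \<inter> \<Union>(E - EA) = {}" using other by blast
  with A B have "sparse k {a} 1 (EA \<union> (E - EA))" by (rule sparse_Un_disjoint)
  moreover have "EA \<union> (E - EA) = E" unfolding EA_def by blast
  ultimately show ?thesis by simp
qed

lemma isolated_in_same_part_pairs:
  assumes "ps ! p = 1"
  shows "(p, 0) \<notin> \<Union>(same_part_pairs ps)"
proof
  assume "(p, 0) \<in> \<Union>(same_part_pairs ps)"
  then obtain x y where "x \<in> fst (complete_multipartite ps)" "y \<in> fst (complete_multipartite ps)"
    "x \<noteq> y" "fst x = fst y" "(p, 0) \<in> {x, y}"
    unfolding same_part_pairs_def by blast
  then show False using assms unfolding fst_complete_multipartite by auto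
qed

definition copy_edges :: "'a rgraph list \<Rightarrow> nat \<Rightarrow> (nat \<times> 'a) set set" where
  "copy_edges hs l = image (path_lab hs l) ` snd (fst (hs ! l))"

lemma snd_path_graph: "snd (path_graph hs) = (\<Union>l<length hs. copy_edges hs l)"
  by (simp add: path_graph_def copy_edges_def)

lemma path_lab_cases:
  "path_lab hs l x = (l, x) \<or> path_lab hs l x = (Suc l, fst (snd (hs ! Suc l)))"
  by (simp add: path_lab_def)

lemma path_lab_eq: "x \<noteq> snd (snd (hs ! l)) \<Longrightarrow> path_lab hs l x = (l, x)"
  by (simp add: path_lab_def)

lemma inj_path_lab: "inj (path_lab hs l)"
  by (rule injI) (auto simp: path_lab_def split: if_splits)

lemma fst_path_lab: "fst (path_lab hs l x) = l \<or> fst (path_lab hs l x) = Suc l"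
  using path_lab_cases[of hs l x] by auto

lemma path_lab_overlap:
  assumes "l < l'" "path_lab hs l x = path_lab hs l' y"
  shows "path_lab hs l' y = (l', fst (snd (hs ! l')))"
  using assms path_lab_cases[of hs l x] path_lab_cases[of hs l' y] by auto

lemma path_lab_eq_start: "path_lab hs 0 x = path_start hs \<Longrightarrow> x = fst (snd (hs ! 0))"
  using path_lab_cases[of hs 0 x] by (auto simp: path_start_def)

lemma path_start_notin_copy:
  assumes "0 < l" "z \<in> \<Union>(image (path_lab hs l) ` E)"
  shows "z \<noteq> path_start hs"
proof -
  obtain x where "z = path_lab hs l x" using assms(2) by blast
  then show ?thesis using assms(1) fst_path_lab[of hs l x] by (auto simp: path_start_def)
qed

lemma sparse_image_path_lab:
  "sparse k S c E \<Longrightarrow> sparse k (path_lab hs l ` S) c (image (path_lab hs l) ` E)"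
  by (rule sparse_image) (auto intro: inj_on_subset[OF inj_path_lab] simp: inj_image_mem_iff[OF inj_path_lab])

text \<open>Consecutive copies of a path share exactly one vertex, so its blocks form a chain.\<close>

lemma sparse_path_blocks:
  fixes m0 m1 :: nat
  assumes "sparse k S c (Y m0)" "c \<le> k" "\<And>l. m0 < l \<Longrightarrow> l < m1 \<Longrightarrow> sparse k S k (Y l)"
    and blocks: "\<And>l. \<Union>(Y l) \<subseteq> range (path_lab hs l)"
  shows "sparse k S c (\<Union>l\<in>{m0..<m1}. Y l)"
proof (rule sparse_UN_chain[where Y = Y and z = "\<lambda>l. (l, fst (snd (hs ! l)))"])
  fix l l' :: nat assume "l < l'"
  show "\<Union>(Y l) \<inter> \<Union>(Y l') \<subseteq> {(l', fst (snd (hs ! l')))}"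
  proof
    fix z assume "z \<in> \<Union>(Y l) \<inter> \<Union>(Y l')"
    then obtain x y where z: "z = path_lab hs l x" "z = path_lab hs l' y" using blocks by blast
    then have "path_lab hs l' y = (l', fst (snd (hs ! l')))"
      using path_lab_overlap[OF \<open>l < l'\<close>, of hs x y] by simp
    then show "z \<in> {(l', fst (snd (hs ! l')))}" using z by simp
  qed
qed (use assms in auto)

lemma copy_edges_range: "\<Union>(copy_edges hs l) \<subseteq> range (path_lab hs l)"
  by (auto simp: copy_edges_def)

lemma sparse_copy_edges: "sparse k {} c (snd (fst (hs ! l))) \<Longrightarrow> sparse k {} c (copy_edges hs l)"
  unfolding copy_edges_def using sparse_image_path_lab[of k "{}"] by simp

lemma sparse_path:
  assumes "\<forall>l<length hs. sparse k {} k (snd (fst (hs ! l)))"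
  shows "sparse k {} k (snd (path_graph hs))"
proof (cases "hs = []")
  case False
  have copy: "sparse k {} k (copy_edges hs l)" if "l < length hs" for l
    using assms that by (simp add: sparse_copy_edges)
  have "sparse k {} k (\<Union>l\<in>{0..<length hs}. copy_edges hs l)"
    by (rule sparse_path_blocks[of _ _ _ _ _ _ hs]) (use False in \<open>auto simp: copy copy_edges_range\<close>)
  then show ?thesis by (simp add: snd_path_graph atLeast0LessThan)
qed (simp add: path_graph_def)

lemma path_end_mem:
  assumes "hs \<noteq> []" "snd (snd (last hs)) \<in> fst (fst (last hs))"
  shows "path_end hs \<in> fst (path_graph hs)"
proof -
  let ?l = "length hs - 1"
  have "path_end hs = path_lab hs ?l (snd (snd (hs ! ?l)))"
    using assms(1) by (simp add: path_end_def path_lab_def last_conv_nth)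
  then show ?thesis
    using assms by (auto simp: path_graph_def last_conv_nth)
qed

text \<open>In the gadget, the part \<open>A\<close> of a path hangs off its (identified) first endpoint and
  the part \<open>B\<close> off the copy of \<open>H\<close>; since \<open>A\<close> and \<open>B\<close> share no vertex, the gadget
  becomes a tree of sparse blocks.\<close>

definition path_split :: "nat \<Rightarrow> 'a rgraph list \<Rightarrow> (nat \<times> 'a) set set \<Rightarrow> (nat \<times> 'a) set set \<Rightarrow> bool" where
  "path_split k hs A B \<longleftrightarrow> 2 \<le> length hs \<and> snd (path_graph hs) = A \<union> B \<and> \<Union>A \<inter> \<Union>B = {} \<and>
     path_start hs \<notin> \<Union>B \<and> path_end hs \<notin> \<Union>A \<and>
     sparse k {} k A \<and> sparse k {path_start hs} 1 A \<and> sparse k {} k B"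

lemma path_split_isolated_start:
  assumes "2 \<le> length hs" "\<forall>l<length hs. sparse k {} k (snd (fst (hs ! l)))"
    and isolated: "fst (snd (hs ! 0)) \<notin> \<Union>(snd (fst (hs ! 0)))"
  shows "path_split k hs {} (snd (path_graph hs))"
proof -
  have start: "path_start hs \<notin> \<Union>(copy_edges hs l)" for l
  proof
    assume "path_start hs \<in> \<Union>(copy_edges hs l)"
    then obtain e where e: "e \<in> snd (fst (hs ! l))" "path_start hs \<in> path_lab hs l ` e"
      unfolding copy_edges_def by blast
    then obtain x where x: "x \<in> \<Union>(snd (fst (hs ! l)))" "path_lab hs l x = path_start hs"
      by (metis UnionI imageE)
    show False
    proof (cases "l = 0")
      case True
      then show False using x isolated path_lab_eq_start[of hs x] by simp
    next
      case False
      then show False using x(2) fst_path_lab[of hs l x] by (auto simp: path_start_def)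
    qed
  qed
  then have "path_start hs \<notin> \<Union>(snd (path_graph hs))" unfolding snd_path_graph by blast
  then show ?thesis using sparse_path[OF assms(2)] assms(1) unfolding path_split_def by simp
qed

definition path_prefix :: "'a rgraph list \<Rightarrow> nat \<Rightarrow> 'a set set \<Rightarrow> (nat \<times> 'a) set set" where
  "path_prefix hs m EA = (\<Union>l<m. copy_edges hs l) \<union> image (path_lab hs m) ` EA"

definition path_suffix :: "'a rgraph list \<Rightarrow> nat \<Rightarrow> 'a set set \<Rightarrow> (nat \<times> 'a) set set" where
  "path_suffix hs m EB = image (path_lab hs m) ` EB \<union> (\<Union>l\<in>{Suc m..<length hs}. copy_edges hs l)"

context
  fixes hs :: "'a rgraph list" and m :: nat and EA EB :: "'a set set"
  assumes m: "1 \<le> m" "Suc m < length hs"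
    and cut: "snd (fst (hs ! m)) = EA \<union> EB" "\<Union>EA \<inter> \<Union>EB = {}"
      "fst (snd (hs ! m)) \<notin> \<Union>EB" "snd (snd (hs ! m)) \<notin> \<Union>EA"
begin

lemma path_prefix_vertex:
  assumes "z \<in> \<Union>(path_prefix hs m EA)"
  shows "fst z < m \<or> z = (m, fst (snd (hs ! m))) \<or> (\<exists>x\<in>\<Union>EA. z = (m, x))"
proof -
  consider (copy) l where "l < m" "z \<in> \<Union>(copy_edges hs l)"
    | (cut) "z \<in> path_lab hs m ` \<Union>EA"
    using assms unfolding path_prefix_def image_Union by blast
  then show ?thesis
  proof cases
    case copy
    then obtain x where "z = path_lab hs l x" unfolding copy_edges_def image_Union[symmetric] by blast
    then show ?thesis using path_lab_cases[of hs l x] copy(1) by (cases "Suc l = m") auto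
  next
    case cut
    then obtain x where "x \<in> \<Union>EA" "z = path_lab hs m x" by blast
    then show ?thesis using path_lab_eq[of x hs m] \<open>snd (snd (hs ! m)) \<notin> \<Union>EA\<close> by auto
  qed
qed

lemma path_suffix_vertex:
  assumes "z \<in> \<Union>(path_suffix hs m EB)"
  shows "m < fst z \<or> (\<exists>x\<in>\<Union>EB. z = (m, x))"
proof -
  consider (cut) "z \<in> path_lab hs m ` \<Union>EB"
    | (copy) l where "Suc m \<le> l" "z \<in> \<Union>(copy_edges hs l)"
    using assms unfolding path_suffix_def image_Union by fastforce
  then show ?thesis
  proof cases
    case cut
    then obtain x where "x \<in> \<Union>EB" "z = path_lab hs m x" by blast
    then show ?thesis using path_lab_cases[of hs m x] by auto
  next
    case copy
    then obtain x where "z = path_lab hs l x" unfolding copy_edges_def image_Union[symmetric] by blast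
    then show ?thesis using fst_path_lab[of hs l x] copy(1) by auto
  qed
qed

lemma path_prefix_suffix_disjoint: "\<Union>(path_prefix hs m EA) \<inter> \<Union>(path_suffix hs m EB) = {}"
proof -
  have False if A: "z \<in> \<Union>(path_prefix hs m EA)" and B: "z \<in> \<Union>(path_suffix hs m EB)" for z
    using path_suffix_vertex[OF B]
  proof
    assume "m < fst z"
    then show False using path_prefix_vertex[OF A] by auto
  next
    assume "\<exists>y\<in>\<Union>EB. z = (m, y)"
    then obtain y where "y \<in> \<Union>EB" "z = (m, y)" by blast
    then show False using path_prefix_vertex[OF A] cut(2,3) by auto
  qed
  then show ?thesis by blast
qed

lemma path_edges_prefix_suffix: "snd (path_graph hs) = path_prefix hs m EA \<union> path_suffix hs m EB"
proof -
  have "{..<length hs} = {..<m} \<union> {m} \<union> {Suc m..<length hs}" using m by auto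
  moreover have "copy_edges hs m = image (path_lab hs m) ` EA \<union> image (path_lab hs m) ` EB"
    unfolding copy_edges_def cut(1) by (rule image_Un)
  ultimately show ?thesis
    unfolding snd_path_graph path_prefix_def path_suffix_def by auto
qed

lemma sparse_path_prefix_blocks:
  assumes "sparse k S c (copy_edges hs 0)" "c \<le> k" "\<And>l. 0 < l \<Longrightarrow> l < m \<Longrightarrow> sparse k S k (copy_edges hs l)"
    and "sparse k S k (image (path_lab hs m) ` EA)"
  shows "sparse k S c (path_prefix hs m EA)"
proof -
  define Y where "Y l = (if l < m then copy_edges hs l else image (path_lab hs l) ` EA)" for l
  have "sparse k S c (\<Union>l\<in>{0..<Suc m}. Y l)"
    by (rule sparse_path_blocks[of _ _ _ _ _ _ hs])
      (use assms m in \<open>auto simp: Y_def copy_edges_range less_Suc_eq\<close>)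
  moreover have "(\<Union>l\<in>{0..<Suc m}. Y l) = path_prefix hs m EA"
    unfolding path_prefix_def Y_def by (auto simp: less_Suc_eq)
  ultimately show ?thesis by simp
qed

lemma sparse_path_prefix:
  assumes copies: "\<forall>l<length hs. sparse k {} k (snd (fst (hs ! l)))"
    and first: "sparse k {fst (snd (hs ! 0))} 1 (snd (fst (hs ! 0)))" and "1 \<le> k"
  shows "sparse k {} k (path_prefix hs m EA)" "sparse k {path_start hs} 1 (path_prefix hs m EA)"
proof -
  have "sparse k {} k (snd (fst (hs ! m)))" using copies m by simp
  then have "sparse k {} k EA" by (rule sparse_subset) (use cut(1) in blast)
  then have last: "sparse k {} k (image (path_lab hs m) ` EA)"
    using sparse_image_path_lab[of k "{}" k EA hs m] by simp
  have copy: "sparse k {} k (copy_edges hs l)" if "l \<le> m" for l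
    using copies m that by (simp add: sparse_copy_edges)
  show "sparse k {} k (path_prefix hs m EA)"
    by (rule sparse_path_prefix_blocks) (use copy last in auto)
  have late: "sparse k {path_start hs} k E" if "sparse k {} k E" "\<Union>E \<subseteq> range (path_lab hs l)" "0 < l"
    for E l
  proof (rule sparse_outside_mono[OF that(1)])
    have "fst (path_lab hs l x) \<noteq> fst (path_start hs)" for x
      using fst_path_lab[of hs l x] that(3) by (auto simp: path_start_def)
    then have "path_start hs \<noteq> path_lab hs l x" for x by metis
    then show "{path_start hs} \<inter> \<Union>E \<subseteq> {}" using that(2) by blast
  qed
  have "sparse k {path_start hs} 1 (copy_edges hs 0)"
    unfolding copy_edges_def using path_lab_eq_start
    by (intro sparse_image[OF first]) (auto intro: inj_on_subset[OF inj_path_lab])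
  then show "sparse k {path_start hs} 1 (path_prefix hs m EA)"
  proof (rule sparse_path_prefix_blocks)
    show "sparse k {path_start hs} k (copy_edges hs l)" if "0 < l" "l < m" for l
      using late[OF copy copy_edges_range] that by simp
    show "sparse k {path_start hs} k (image (path_lab hs m) ` EA)"
      using late[OF last _] m by auto
  qed (use \<open>1 \<le> k\<close> in simp)
qed

lemma sparse_path_suffix:
  assumes copies: "\<forall>l<length hs. sparse k {} k (snd (fst (hs ! l)))"
  shows "sparse k {} k (path_suffix hs m EB)"
proof -
  define Y where "Y l = (if l = m then image (path_lab hs l) ` EB else copy_edges hs l)" for l
  have "sparse k {} k (snd (fst (hs ! m)))" using copies m by simp
  then have "sparse k {} k EB" by (rule sparse_subset) (use cut(1) in blast)
  then have "sparse k {} k (Y m)" using sparse_image_path_lab[of k "{}" k EB hs m] by (simp add: Y_def)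
  then have "sparse k {} k (\<Union>l\<in>{m..<length hs}. Y l)"
    by (rule sparse_path_blocks[of _ _ _ _ _ _ hs])
      (use copies in \<open>auto simp: Y_def copy_edges_range sparse_copy_edges\<close>)
  moreover have "(\<Union>l\<in>{m..<length hs}. Y l) = path_suffix hs m EB"
  proof -
    have "{m..<length hs} = insert m {Suc m..<length hs}" using m by auto
    then show ?thesis unfolding path_suffix_def Y_def by auto
  qed
  ultimately show ?thesis by simp
qed

lemma path_split_at:
  assumes "\<forall>l<length hs. sparse k {} k (snd (fst (hs ! l)))"
    and "sparse k {fst (snd (hs ! 0))} 1 (snd (fst (hs ! 0)))" and "1 \<le> k"
  shows "path_split k hs (path_prefix hs m EA) (path_suffix hs m EB)"
proof -
  have "path_end hs \<notin> \<Union>(path_prefix hs m EA)"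
    using path_prefix_vertex m by (fastforce simp: path_end_def)
  moreover have "path_start hs \<notin> \<Union>(path_suffix hs m EB)"
    using path_suffix_vertex m by (fastforce simp: path_start_def)
  ultimately show ?thesis
    using m assms sparse_path_prefix sparse_path_suffix path_prefix_suffix_disjoint
      path_edges_prefix_suffix unfolding path_split_def by simp
qed

end

lemma rstar_bounds:
  assumes "0 < k" "0 < r"
  shows "k * (rstar r k - 1) < r" "r \<le> k * rstar r k" "1 \<le> rstar r k"
proof -
  define c where "c = \<lceil>real r / real k\<rceil>"
  have k: "(0::real) < real k" using assms by simp
  have "0 < c" using assms unfolding c_def by simp
  then have rstar: "real (rstar r k) = of_int c" "1 \<le> rstar r k"
    unfolding rstar_def c_def[symmetric] by linarith+
  then show "1 \<le> rstar r k" by simp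
  have "real r \<le> real (k * rstar r k)"
    using ceiling_divide_upper[OF k, of "real r"] rstar by (simp add: c_def mult.commute)
  then show "r \<le> k * rstar r k" by linarith
  have "real (k * (rstar r k - 1)) < real r"
    using ceiling_divide_lower[OF k, of "real r"] rstar by (simp add: c_def of_nat_diff mult.commute)
  then show "k * (rstar r k - 1) < r" by linarith
qed

lemma qq_bounds:
  assumes "0 < k" "0 < r"
  shows "1 \<le> qq r k" "qq r k \<le> k" "\<not> k dvd r \<Longrightarrow> qq r k < k"
proof -
  note b = rstar_bounds[OF assms]
  have split: "k * rstar r k = k * (rstar r k - 1) + k"
    using b(3) by (cases "rstar r k") simp_all
  show "1 \<le> qq r k" "qq r k \<le> k" unfolding qq_def using b split by linarith+
  show "qq r k < k" if "\<not> k dvd r"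
  proof -
    have "r \<noteq> k * rstar r k" using that by (metis dvd_triv_left)
    then show ?thesis unfolding qq_def using b split by linarith
  qed
qed

lemma sparse_rcompl_complete_multipartite:
  assumes "\<forall>p<length ps. ps ! p \<le> k"
  shows "sparse k {} k (snd (fst (rcompl (complete_multipartite ps, a, b))))"
  using edges_rcompl_complete_multipartite by (intro sparse_same_part_pairs[OF assms]) blast

lemma Hdet_parts_le:
  assumes "0 < k" "0 < r"
  shows "\<forall>p<length (replicate (rstar r k - 1) k @ [qq r k]). (replicate (rstar r k - 1) k @ [qq r k]) ! p \<le> k"
  using qq_bounds(2)[OF assms] by (auto simp: nth_append)

lemma sparse_gcompl_Hdet:
  assumes "0 < k" "0 < r"
  shows "sparse k {} k (snd (gcompl (Hdet r k)))"
  unfolding Hdet_def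
  by (rule sparse_same_part_pairs[OF Hdet_parts_le[OF assms] edges_gcompl_complete_multipartite])

lemma edge_gcompl_Hdet:
  assumes "2 \<le> k" "k \<le> r"
  shows "{(0, 0), (0, 1)} \<in> snd (gcompl (Hdet r k))"
    "(0, 0) \<in> fst (gcompl (Hdet r k))" "(0, 1) \<in> fst (gcompl (Hdet r k))"
proof -
  define ps where "ps = replicate (rstar r k - 1) k @ [qq r k]"
  have "2 \<le> ps ! 0"
  proof (cases "rstar r k - 1")
    case 0
    then show ?thesis using assms by (simp add: ps_def qq_def)
  next
    case (Suc n)
    then show ?thesis using assms by (simp add: ps_def)
  qed
  then have V: "(0, 0) \<in> fst (complete_multipartite ps)" "(0, 1) \<in> fst (complete_multipartite ps)"
    unfolding fst_complete_multipartite ps_def by auto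
  moreover have "{(0::nat, 0::nat), (0, 1)} \<notin> snd (complete_multipartite ps)"
    using doubleton_in_snd_complete_multipartite[OF V] by simp
  ultimately show "{(0, 0), (0, 1)} \<in> snd (gcompl (Hdet r k))"
    "(0, 0) \<in> fst (gcompl (Hdet r k))" "(0, 1) \<in> fst (gcompl (Hdet r k))"
    unfolding Hdet_def ps_def[symmetric] gcompl_def by auto
qed

text \<open>Every copy is the complement of a complete multipartite graph with parts of size at most
  \<open>k\<close>, i.e. a disjoint union of small cliques. The path is cut inside a copy \<open>m\<close> whose roots lie in
  different parts, between the clique of the first root and the rest.\<close>

lemma path_split_multipartite:
  fixes hs :: "(nat \<times> nat) rgraph list"
  assumes parts: "\<forall>p<length ps. ps ! p \<le> k" and k: "2 \<le> k"
    and copies: "\<forall>h\<in>set hs. \<exists>a b. h = rcompl (complete_multipartite ps, a, b)"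
    and first: "hs ! 0 = rcompl (complete_multipartite ps, a, b)" "a \<noteq> b"
      "a \<in> fst (complete_multipartite ps)" "b \<in> fst (complete_multipartite ps)" "fst a = fst b"
    and cut: "1 \<le> m" "Suc m < length hs" "hs ! m = rcompl (complete_multipartite ps, c, d)"
      "fst c \<noteq> fst d"
  shows "\<exists>A B. path_split k hs A B"
proof -
  define E where "E = snd (fst (hs ! m))"
  define EA where "EA = {e \<in> E. \<forall>z\<in>e. fst z = fst c}"
  have E: "E \<subseteq> same_part_pairs ps"
    using edges_rcompl_complete_multipartite unfolding E_def cut(3) by blast
  have "\<forall>l<length hs. sparse k {} k (snd (fst (hs ! l)))"
    using copies sparse_rcompl_complete_multipartite[OF parts] by (metis nth_mem)
  moreover have "sparse k {fst (snd (hs ! 0))} 1 (snd (fst (hs ! 0)))"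
    using sparse_same_part_pairs_minus_edge[OF parts k edges_rcompl_complete_multipartite first(2-5)]
    by (simp add: first(1) snd_rcompl)
  moreover have roots: "fst (snd (hs ! m)) = c" "snd (snd (hs ! m)) = d"
    by (simp_all add: cut(3) snd_rcompl)
  have A: "fst z = fst c" if "z \<in> \<Union>EA" for z using that unfolding EA_def by blast
  have B: "fst z \<noteq> fst c" if "z \<in> \<Union>(E - EA)" for z
    using same_part_pairs_other_part[OF E that[unfolded EA_def]] .
  have "snd (fst (hs ! m)) = EA \<union> (E - EA)" unfolding E_def EA_def by blast
  moreover have "\<Union>EA \<inter> \<Union>(E - EA) = {}" using A B by blast
  moreover have "fst (snd (hs ! m)) \<notin> \<Union>(E - EA)" using B roots by blast
  moreover have "snd (snd (hs ! m)) \<notin> \<Union>EA" using A[of d] cut(4) roots(2) by auto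
  ultimately have "path_split k hs (path_prefix hs m EA) (path_suffix hs m (E - EA))"
    using cut(1,2) k by (intro path_split_at) simp_all
  then show ?thesis by blast
qed

lemma path_split_vecH1:
  fixes r k :: nat
  assumes "0 < k"
  defines "hs \<equiv> map rcompl [H1 r k, H1' r k]"
  shows "path_split k hs {} (snd (path_graph hs))" "path_end hs \<in> fst (path_graph hs)"
proof -
  define m where "m = r div k"
  define ps where "ps = replicate m k @ [1]"
  have H1: "rcompl (H1 r k) = rcompl (complete_multipartite ps, (m, 0), (0, 0))"
    using rcompl_Diff_root_edge[of "fst (complete_multipartite ps)" "snd (complete_multipartite ps)"]
    by (simp add: H1_def m_def ps_def Let_def)
  have H1': "rcompl (H1' r k) = rcompl (complete_multipartite ps, (0, 0), (m, 0))"
    using rcompl_Diff_root_edge[of "fst (complete_multipartite ps)" "snd (complete_multipartite ps)"]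
    by (simp add: H1'_def H1_def m_def ps_def Let_def insert_commute)
  have parts: "\<forall>p<length ps. ps ! p \<le> k" using assms(1) by (auto simp: ps_def nth_append)
  have "(m, 0) \<notin> \<Union>(same_part_pairs ps)"
    by (rule isolated_in_same_part_pairs) (simp add: ps_def nth_append)
  then have "fst (snd (hs ! 0)) \<notin> \<Union>(snd (fst (hs ! 0)))"
    using edges_rcompl_complete_multipartite by (fastforce simp: hs_def H1 snd_rcompl)
  then show "path_split k hs {} (snd (path_graph hs))"
    using sparse_rcompl_complete_multipartite[OF parts]
    by (intro path_split_isolated_start) (auto simp: hs_def H1 H1' less_Suc_eq)
  have "(m, 0) \<in> fst (complete_multipartite ps)"
    by (simp add: fst_complete_multipartite ps_def nth_append)
  then show "path_end hs \<in> fst (path_graph hs)"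
    by (intro path_end_mem) (simp_all add: hs_def H1' fst_fst_rcompl snd_rcompl)
qed

lemma path_split_vecH2:
  fixes r k :: nat
  assumes "2 \<le> k" "0 < r" "\<not> k dvd r"
  defines "hs \<equiv> map rcompl [H0_2 r k, H0'_2 r k, H0'_2 r k, H0_2 r k]"
  shows "\<exists>A B. path_split k hs A B" "path_end hs \<in> fst (path_graph hs)"
proof -
  define P where "P = rstar r k - 1"
  define ps where "ps = replicate P k @ [qq r k + 1]"
  have H0: "H0_2 r k = (complete_multipartite ps, (P, 0), (P, 1))"
    and H0': "H0'_2 r k = (complete_multipartite ps, (0, 0), (1, 0))"
    by (simp_all add: H0_2_def H0'_2_def ps_def P_def)
  have q: "1 \<le> qq r k" "qq r k < k" using qq_bounds assms by auto
  have parts: "\<forall>p<length ps. ps ! p \<le> k" using q by (auto simp: ps_def nth_append)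
  have V: "(P, 0) \<in> fst (complete_multipartite ps)" "(P, 1) \<in> fst (complete_multipartite ps)"
    using q by (simp_all add: fst_complete_multipartite ps_def nth_append)
  show "\<exists>A B. path_split k hs A B"
    by (rule path_split_multipartite[OF parts assms(1), of _ "(P, 0)" "(P, 1)" 1 "(0, 0)" "(1, 0)"])
      (use V in \<open>auto simp: hs_def H0 H0'\<close>)
  show "path_end hs \<in> fst (path_graph hs)"
    using V by (intro path_end_mem) (simp_all add: hs_def H0 fst_fst_rcompl snd_rcompl)
qed

lemma path_split_vecH3:
  fixes r k :: nat
  assumes "2 \<le> k" "k < r" "r < 2 * k" and hs0: "hs0 \<in> vecH3 r k"
  defines "hs \<equiv> map rcompl hs0"
  shows "\<exists>A B. path_split k hs A B" "path_end hs \<in> fst (path_graph hs)"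
proof -
  define ps where "ps = [k, r - k + 1]"
  have H0: "H0_3 r k = (complete_multipartite ps, (1, 0), (1, 1))"
    and H0': "H0'_3 r k = (complete_multipartite ps, (0, 0), (1, 0))"
    by (simp_all add: H0_3_def H0'_3_def ps_def)
  obtain m where m: "1 \<le> m" "m < length hs0 - 1" "hs0 ! m = H0'_3 r k"
    using hs0 unfolding vecH3_def by blast
  have hs0': "3 \<le> length hs0" "set hs0 \<subseteq> {H0_3 r k, H0'_3 r k}" "hd hs0 = H0_3 r k"
    "last hs0 = H0_3 r k"
    using hs0 unfolding vecH3_def by auto
  have parts: "\<forall>p<length ps. ps ! p \<le> k" using assms(3) by (auto simp: ps_def nth_Cons')
  have V: "(1, 0) \<in> fst (complete_multipartite ps)" "(1, 1) \<in> fst (complete_multipartite ps)"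
    using assms(2) by (simp_all add: fst_complete_multipartite ps_def)
  have "hs ! 0 = rcompl (H0_3 r k)" using hs0'(1,3) by (cases hs0) (simp_all add: hs_def)
  moreover have "\<forall>h\<in>set hs. \<exists>a b. h = rcompl (complete_multipartite ps, a, b)"
  proof
    fix h assume "h \<in> set hs"
    then obtain h0 where "h0 \<in> set hs0" "h = rcompl h0" unfolding hs_def by auto
    then show "\<exists>a b. h = rcompl (complete_multipartite ps, a, b)"
      using hs0'(2) unfolding H0 H0' by blast
  qed
  ultimately show "\<exists>A B. path_split k hs A B"
    by (intro path_split_multipartite[OF parts assms(1), of _ "(1, 0)" "(1, 1)" m "(0, 0)" "(1, 0)"])
      (use V m in \<open>auto simp: hs_def H0 H0'\<close>)
  have "hs0 \<noteq> []" using hs0'(1) by auto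
  then have "last hs = rcompl (H0_3 r k)" using hs0'(4) by (simp add: hs_def last_map)
  then show "path_end hs \<in> fst (path_graph hs)"
    using hs0'(1) V by (intro path_end_mem) (auto simp: hs_def H0 fst_fst_rcompl snd_rcompl)
qed

lemma path_split_family:
  fixes r k :: nat and hs0 :: "(nat \<times> nat) rgraph list"
  assumes "2 \<le> k" "k \<le> r"
    and "k dvd r \<Longrightarrow> hs0 \<in> vecH1 r k"
    and "\<not> k dvd r \<Longrightarrow> 2 * k < r \<Longrightarrow> hs0 \<in> vecH2 r k"
    and "r < 2 * k \<Longrightarrow> k < r \<Longrightarrow> hs0 \<in> vecH3 r k"
  shows "(\<exists>A B. path_split k (map rcompl hs0) A B) \<and>
    path_end (map rcompl hs0) \<in> fst (path_graph (map rcompl hs0))"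
proof -
  have "k \<noteq> r" "2 * k \<noteq> r" if "\<not> k dvd r" using that by auto
  then consider "k dvd r" | "\<not> k dvd r" "2 * k < r" | "k < r" "r < 2 * k"
    using assms(2) by linarith
  then show ?thesis
  proof cases
    case 1
    then show ?thesis using assms(1,3) path_split_vecH1[of k r] by (auto simp: vecH1_def)
  next
    case 2
    then show ?thesis using assms(1,4) path_split_vecH2[of k r] by (auto simp: vecH2_def)
  next
    case 3
    then show ?thesis using assms(1,5) path_split_vecH3[of k r hs0] by auto
  qed
qed

lemma glab_eq: "x \<noteq> path_start (fam i j) \<Longrightarrow> glab fam i j x = (i, j, x)"
  by (simp add: glab_def)

lemma glab_eq_glab_iff:
  "glab fam i j x = glab fam i' j' x' \<longleftrightarrow>
     i = i' \<and> (j = j' \<and> x = x' \<or> 1 \<le> i \<and> x = path_start (fam i j) \<and> x' = path_start (fam i' j'))"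
  by (auto simp: glab_def)

lemma inj_glab: "inj (glab fam i j)"
  by (rule injI) (metis glab_eq_glab_iff)

lemma fst_glab: "fst (glab fam i j x) = i"
  by (simp add: glab_def)

lemma glab_0: "glab fam 0 j x = (0, j, x)"
  by (simp add: glab_def)

lemma gadget_base_eq: "gadget_base fam s = {(0, j, path_start (fam 0 j)) | j. j < s}"
  by (simp add: gadget_base_def glab_def)

lemma glab_in_gadget_base:
  "glab fam i j x \<in> gadget_base fam s \<Longrightarrow> i = 0 \<and> x = path_start (fam i j)"
  by (auto simp: gadget_base_eq glab_def split: if_splits)

locale gadget_split =
  fixes k r s :: nat and fam :: "nat \<Rightarrow> nat \<Rightarrow> 'a rgraph list" and H :: "'b graph"
    and \<sigma> :: "nat \<Rightarrow> nat \<Rightarrow> 'b" and A B :: "nat \<Rightarrow> nat \<Rightarrow> (nat \<times> 'a) set set"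
  assumes split: "\<And>i j. i < r \<Longrightarrow> j < s \<Longrightarrow> path_split k (fam i j) (A i j) (B i j)"
    and sparse_H: "sparse k {} k (snd H)"
    and inj_\<sigma>: "\<And>j. j < s \<Longrightarrow> inj_on (\<sigma> j) {..<r}"
    and r: "0 < r"
begin

abbreviation st :: "nat \<Rightarrow> nat \<Rightarrow> nat \<times> 'a" where "st i j \<equiv> path_start (fam i j)"
abbreviation en :: "nat \<Rightarrow> nat \<Rightarrow> nat \<times> 'a" where "en i j \<equiv> path_end (fam i j)"

definition start_part :: "nat \<Rightarrow> nat \<Rightarrow> (nat \<times> nat \<times> nat \<times> 'a) set set" where
  "start_part i j = image (glab fam i j) ` A i j"

definition end_part :: "nat \<Rightarrow> nat \<Rightarrow> (nat \<times> nat \<times> nat \<times> 'a) set set" where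
  "end_part i j = image (glab fam i j) ` B i j"

definition H_copy :: "nat \<Rightarrow> (nat \<times> nat \<times> nat \<times> 'a) set set" where
  "H_copy j = {{glab fam i j (en i j), glab fam i' j (en i' j)} | i i'.
     i < r \<and> i' < r \<and> {\<sigma> j i, \<sigma> j i'} \<in> snd H}"

lemma split_facts:
  assumes "i < r" "j < s"
  shows "\<Union>(A i j) \<inter> \<Union>(B i j) = {}" "st i j \<notin> \<Union>(B i j)" "en i j \<notin> \<Union>(A i j)"
    "en i j \<noteq> st i j"
  using split[OF assms] by (auto simp: path_split_def path_start_def path_end_def)

lemma glab_en: "i < r \<Longrightarrow> j < s \<Longrightarrow> glab fam i j (en i j) = (i, j, en i j)"
  using split_facts(4) by (simp add: glab_eq)

lemma H_copy_vertex: "j < s \<Longrightarrow> z \<in> \<Union>(H_copy j) \<Longrightarrow> \<exists>i<r. z = (i, j, en i j)"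
  unfolding H_copy_def using glab_en by auto

lemma edges_gadget:
  "snd (gadget fam H r s \<sigma>) = (\<Union>j<s. start_part 0 j) \<union> (\<Union>i\<in>{1..<r}. \<Union>j<s. start_part i j) \<union>
     (\<Union>j<s. H_copy j \<union> (\<Union>i<r. end_part i j))"
proof -
  have "(\<Union>i<r. \<Union>j<s. image (glab fam i j) ` snd (path_graph (fam i j))) =
    (\<Union>i<r. \<Union>j<s. start_part i j \<union> end_part i j)"
  proof (intro SUP_cong refl)
    fix i j assume "i \<in> {..<r}" "j \<in> {..<s}"
    then have "snd (path_graph (fam i j)) = A i j \<union> B i j" using split by (simp add: path_split_def)
    then show "image (glab fam i j) ` snd (path_graph (fam i j)) = start_part i j \<union> end_part i j"
      unfolding start_part_def end_part_def by (simp only: image_Un)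
  qed
  then have "snd (gadget fam H r s \<sigma>) = (\<Union>i<r. \<Union>j<s. start_part i j \<union> end_part i j) \<union> (\<Union>j<s. H_copy j)"
    unfolding gadget_def H_copy_def by simp
  moreover have "{..<r} = insert 0 {1..<r}" using r by auto
  then have "(\<Union>i<r. \<Union>j<s. start_part i j) = (\<Union>j<s. start_part 0 j) \<union> (\<Union>i\<in>{1..<r}. \<Union>j<s. start_part i j)"
    by simp
  ultimately show ?thesis by (auto simp: UN_Un_distrib)
qed

lemma start_part_vertex: "z \<in> \<Union>(start_part i j) \<Longrightarrow> \<exists>x\<in>\<Union>(A i j). z = glab fam i j x"
  unfolding start_part_def image_Union[symmetric] by blast

lemma end_part_vertex:
  assumes "i < r" "j < s" "z \<in> \<Union>(end_part i j)"
  shows "\<exists>x\<in>\<Union>(B i j). z = (i, j, x)"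
proof -
  obtain x where "x \<in> \<Union>(B i j)" "z = glab fam i j x"
    using assms(3) unfolding end_part_def image_Union[symmetric] by blast
  then show ?thesis using split_facts(2)[OF assms(1,2)] glab_eq by metis
qed

lemma start_part_fst: "z \<in> \<Union>(start_part i j) \<Longrightarrow> fst z = i"
  using start_part_vertex fst_glab by metis

lemma start_part_0: "z \<in> \<Union>(start_part 0 j) \<Longrightarrow> fst (snd z) = j"
  using start_part_vertex[of z 0 j] by (auto simp: glab_0)

lemma end_component_snd:
  assumes "j < s" "z \<in> \<Union>(H_copy j \<union> (\<Union>i<r. end_part i j))"
  shows "fst (snd z) = j"
proof (cases "z \<in> \<Union>(H_copy j)")
  case True
  then obtain i where "z = (i, j, en i j)" using H_copy_vertex[OF assms(1)] by blast
  then show ?thesis by simp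
next
  case False
  then obtain i where "i < r" "z \<in> \<Union>(end_part i j)" using assms(2) by blast
  then obtain x where "z = (i, j, x)" using end_part_vertex[OF _ assms(1)] by blast
  then show ?thesis by simp
qed

lemma start_part_end_part_disjoint:
  assumes "i < r" "j < s" "i' < r" "j' < s"
  shows "\<Union>(start_part i j) \<inter> \<Union>(end_part i' j') = {}"
proof -
  have False if z: "z \<in> \<Union>(start_part i j)" "z \<in> \<Union>(end_part i' j')" for z
  proof -
    obtain x where x: "x \<in> \<Union>(A i j)" "z = glab fam i j x" using start_part_vertex[OF z(1)] by blast
    obtain y where y: "y \<in> \<Union>(B i' j')" "z = (i', j', y)" using end_part_vertex[OF assms(3,4) z(2)] by blast
    have "y \<noteq> st i' j'" using y(1) split_facts(2)[OF assms(3,4)] by blast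
    then have "glab fam i j x = glab fam i' j' y" using x(2) y(2) glab_eq by metis
    then show False
      using x(1) y(1) \<open>y \<noteq> st i' j'\<close> split_facts(1)[OF assms(1,2)] unfolding glab_eq_glab_iff by blast
  qed
  then show ?thesis by blast
qed

lemma start_part_H_copy_disjoint:
  assumes "i < r" "j < s" "j' < s"
  shows "\<Union>(start_part i j) \<inter> \<Union>(H_copy j') = {}"
proof -
  have False if z: "z \<in> \<Union>(start_part i j)" "z \<in> \<Union>(H_copy j')" for z
  proof -
    obtain x where x: "x \<in> \<Union>(A i j)" "z = glab fam i j x" using start_part_vertex[OF z(1)] by blast
    obtain i' where i': "i' < r" "z = (i', j', en i' j')" using H_copy_vertex[OF assms(3) z(2)] by blast
    then have "glab fam i j x = glab fam i' j' (en i' j')" using x(2) glab_en[OF i'(1) assms(3)] by simp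
    then show False
      using x(1) split_facts(3)[OF assms(1,2)] split_facts(4)[OF i'(1) assms(3)]
      unfolding glab_eq_glab_iff by blast
  qed
  then show ?thesis by blast
qed

context
  fixes S assumes S: "S \<subseteq> gadget_base fam s"
begin

lemma sparse_end_part:
  assumes "i < r" "j < s"
  shows "sparse k S k (end_part i j)"
proof -
  have "sparse k {} k (B i j)" using split[OF assms] by (simp add: path_split_def)
  then show ?thesis unfolding end_part_def
  proof (rule sparse_image)
    show "inj_on (glab fam i j) (\<Union>(B i j))" by (rule inj_on_subset[OF inj_glab]) simp
    show "x \<in> {}" if "x \<in> \<Union>(B i j)" "glab fam i j x \<in> S" for x
      using glab_in_gadget_base[of fam i j x s] that S split_facts(2)[OF assms] by blast
  qed
qed

lemma sparse_start_part:
  assumes "0 < i" "i < r" "j < s"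
  shows "sparse k S k (start_part i j)"
proof -
  have "sparse k {} k (A i j)" using split[OF assms(2,3)] by (simp add: path_split_def)
  then show ?thesis unfolding start_part_def
  proof (rule sparse_image)
    show "inj_on (glab fam i j) (\<Union>(A i j))" by (rule inj_on_subset[OF inj_glab]) simp
    show "x \<in> {}" if "x \<in> \<Union>(A i j)" "glab fam i j x \<in> S" for x
      using glab_in_gadget_base[of fam i j x s] that S assms(1) by auto
  qed
qed

lemma sparse_H_copy:
  assumes j: "j < s"
  shows "sparse k S k (H_copy j)"
proof (rule sparse_embed[OF sparse_H, where f = "\<lambda>z. \<sigma> j (fst z)"])
  show "inj_on (\<lambda>z. \<sigma> j (fst z)) (\<Union>(H_copy j))"
  proof (rule inj_onI)
    fix z z' assume "z \<in> \<Union>(H_copy j)" "z' \<in> \<Union>(H_copy j)" "\<sigma> j (fst z) = \<sigma> j (fst z')"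
    moreover obtain i i' where "i < r" "z = (i, j, en i j)" "i' < r" "z' = (i', j, en i' j)"
      using H_copy_vertex[OF j] calculation(1,2) by meson
    ultimately have "i = i'" using inj_onD[OF inj_\<sigma>[OF j]] by simp
    then show "z = z'" using \<open>z = (i, j, en i j)\<close> \<open>z' = (i', j, en i' j)\<close> by simp
  qed
  show "image (\<lambda>z. \<sigma> j (fst z)) ` H_copy j \<subseteq> snd H"
  proof
    fix e' assume "e' \<in> image (\<lambda>z. \<sigma> j (fst z)) ` H_copy j"
    then obtain i i' where "i < r" "i' < r" "{\<sigma> j i, \<sigma> j i'} \<in> snd H"
      "e' = (\<lambda>z. \<sigma> j (fst z)) ` {glab fam i j (en i j), glab fam i' j (en i' j)}"
      unfolding H_copy_def by blast
    then show "e' \<in> snd H" using glab_en[OF _ j] by simp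
  qed
  show "\<sigma> j (fst z) \<in> {}" if z: "z \<in> \<Union>(H_copy j)" "z \<in> S" for z
  proof -
    obtain i where "i < r" "z = (i, j, en i j)" using H_copy_vertex[OF j z(1)] by blast
    then have "glab fam i j (en i j) \<in> gadget_base fam s" using z(2) S glab_en[OF _ j] by auto
    then show ?thesis using glab_in_gadget_base split_facts(4)[OF \<open>i < r\<close> j] by blast
  qed
qed

text \<open>The start parts of the paths with the same index \<open>i > 0\<close> form a star at the identified
  first endpoint.\<close>

lemma sparse_star:
  assumes "0 < i" "i < r"
  shows "sparse k S k (\<Union>j<s. start_part i j)"
proof -
  have "sparse k S k ({} \<union> (\<Union>j\<in>{..<s}. start_part i j))"
  proof (rule sparse_UN_cut_vertex)
    fix j assume "j \<in> {..<s}"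
    then show "sparse k S k (start_part i j)" using sparse_start_part assms by simp
    show "\<exists>z. \<Union>(start_part i j) \<inter> (\<Union>{} \<union> (\<Union>j'\<in>{..<s} - {j}. \<Union>(start_part i j'))) \<subseteq> {z}"
    proof (intro exI subsetI)
      fix z assume "z \<in> \<Union>(start_part i j) \<inter> (\<Union>{} \<union> (\<Union>j'\<in>{..<s} - {j}. \<Union>(start_part i j')))"
      then obtain j' where "j' \<noteq> j" "z \<in> \<Union>(start_part i j)" "z \<in> \<Union>(start_part i j')" by blast
      then obtain x x' where "z = glab fam i j x" "z = glab fam i j' x'" using start_part_vertex by metis
      then have "z = glab fam i j (st i j)" using \<open>j' \<noteq> j\<close> by (metis glab_eq_glab_iff)
      then show "z \<in> {(i, 0, st i 0)}" using assms(1) by (simp add: glab_def)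
    qed
  qed (use assms in simp_all)
  then show ?thesis by simp
qed

text \<open>The end parts of the paths with the same index \<open>j\<close> hang off the \<open>j\<close>-th copy of \<open>H\<close> at
  their last endpoints.\<close>

lemma sparse_end_component:
  assumes j: "j < s"
  shows "sparse k S k (H_copy j \<union> (\<Union>i<r. end_part i j))"
proof (rule sparse_UN_cut_vertex)
  fix i assume "i \<in> {..<r}"
  then have i: "i < r" by simp
  then show "sparse k S k (end_part i j)" using sparse_end_part j by simp
  show "\<exists>z. \<Union>(end_part i j) \<inter> (\<Union>(H_copy j) \<union> (\<Union>i'\<in>{..<r} - {i}. \<Union>(end_part i' j))) \<subseteq> {z}"
  proof (intro exI subsetI)
    fix z assume z: "z \<in> \<Union>(end_part i j) \<inter> (\<Union>(H_copy j) \<union> (\<Union>i'\<in>{..<r} - {i}. \<Union>(end_part i' j)))"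
    then obtain x where x: "z = (i, j, x)" using end_part_vertex[OF i j] by blast
    show "z \<in> {(i, j, en i j)}"
    proof (cases "z \<in> \<Union>(H_copy j)")
      case True
      then obtain i' where "z = (i', j, en i' j)" using H_copy_vertex[OF j] by blast
      then show ?thesis using x by simp
    next
      case False
      then obtain i' where "i' < r" "i' \<noteq> i" "z \<in> \<Union>(end_part i' j)" using z by blast
      moreover from this obtain y where "z = (i', j, y)" using end_part_vertex[OF _ j] by blast
      ultimately show ?thesis using x by simp
    qed
  qed
qed (simp_all add: sparse_H_copy j)

lemma sparse_gadget_edges:
  assumes "c \<le> k" "\<And>j. j < s \<Longrightarrow> sparse k S c (start_part 0 j)"
  shows "sparse k S c (snd (gadget fam H r s \<sigma>))"
proof -
  let ?R0 = "\<Union>j<s. start_part 0 j"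
  let ?R1 = "\<Union>i\<in>{1..<r}. \<Union>j<s. start_part i j"
  let ?R2 = "\<Union>j<s. H_copy j \<union> (\<Union>i<r. end_part i j)"
  have R0: "sparse k S c ?R0"
  proof (rule sparse_UN_disjoint)
    show "\<Union>(start_part 0 j) \<inter> \<Union>(start_part 0 j') = {}" if "j \<noteq> j'" for j j'
      using start_part_0[of _ j] start_part_0[of _ j'] that by blast
  qed (use assms(2) in auto)
  have R1: "sparse k S k ?R1"
  proof (rule sparse_UN_disjoint)
    show "\<Union>(\<Union>j<s. start_part i j) \<inter> \<Union>(\<Union>j<s. start_part i' j) = {}" if "i \<noteq> i'" for i i'
      using start_part_fst[of _ i] start_part_fst[of _ i'] that by blast
  qed (use sparse_star in auto)
  have R2: "sparse k S k ?R2"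
  proof (rule sparse_UN_disjoint)
    show "\<Union>(H_copy j \<union> (\<Union>i<r. end_part i j)) \<inter> \<Union>(H_copy j' \<union> (\<Union>i<r. end_part i j')) = {}"
      if "j \<in> {..<s}" "j' \<in> {..<s}" "j \<noteq> j'" for j j'
      using end_component_snd[of j] end_component_snd[of j'] that by blast
  qed (use sparse_end_component in auto)
  have start_R2: "z \<notin> \<Union>?R2" if "i < r" "j < s" "z \<in> \<Union>(start_part i j)" for i j z
    using start_part_end_part_disjoint[OF that(1,2)] start_part_H_copy_disjoint[OF that(1,2)] that(2,3)
    by blast
  have "z \<notin> \<Union>?R2" if z: "z \<in> \<Union>?R1" for z
  proof -
    obtain i j where "i \<in> {1..<r}" "j < s" "z \<in> \<Union>(start_part i j)" using z by blast
    then show ?thesis using start_R2[of i j z] by simp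
  qed
  then have "\<Union>?R1 \<inter> \<Union>?R2 = {}" by blast
  with R1 R2 have "sparse k S k (?R1 \<union> ?R2)" by (rule sparse_Un_disjoint)
  then have R12: "sparse k S c (?R1 \<union> ?R2)" using assms(1) by (rule sparse_mono_slack)
  have "z \<notin> \<Union>(?R1 \<union> ?R2)" if "z \<in> \<Union>?R0" for z
  proof -
    obtain j where "j < s" "z \<in> \<Union>(start_part 0 j)" using \<open>z \<in> \<Union>?R0\<close> by blast
    moreover have "z \<notin> \<Union>?R1"
    proof
      assume "z \<in> \<Union>?R1"
      then obtain i j' where "i \<in> {1..<r}" "z \<in> \<Union>(start_part i j')" by blast
      then show False using start_part_fst[OF calculation(2)] start_part_fst[of z i j'] by simp
    qed
    ultimately show ?thesis using start_R2[OF r] by blast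
  qed
  then have "\<Union>?R0 \<inter> \<Union>(?R1 \<union> ?R2) = {}" by blast
  with R0 R12 have "sparse k S c (?R0 \<union> (?R1 \<union> ?R2))" by (rule sparse_Un_disjoint)
  then show ?thesis unfolding edges_gadget by (simp add: Un_assoc)
qed

end

theorem sparse_gadget:
  assumes "0 < k"
  shows "sparse k {} k (snd (gadget fam H r s \<sigma>))"
    "sparse k (gadget_base fam s) 1 (snd (gadget fam H r s \<sigma>))"
proof -
  have inj: "inj_on (glab fam 0 j) (\<Union>(A 0 j))" for j by (rule inj_on_subset[OF inj_glab]) simp
  have A0: "sparse k {} k (A 0 j)" "sparse k {st 0 j} 1 (A 0 j)" if "j < s" for j
    using split[OF r that] by (simp_all add: path_split_def)
  show "sparse k {} k (snd (gadget fam H r s \<sigma>))"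
    by (rule sparse_gadget_edges) (use A0 inj in \<open>auto simp: start_part_def intro: sparse_image\<close>)
  show "sparse k (gadget_base fam s) 1 (snd (gadget fam H r s \<sigma>))"
  proof (rule sparse_gadget_edges)
    fix j assume "j < s"
    show "sparse k (gadget_base fam s) 1 (start_part 0 j)"
      unfolding start_part_def using glab_in_gadget_base
      by (intro sparse_image[OF A0(2)[OF \<open>j < s\<close>] inj]) blast
  qed (use assms in simp_all)
qed

lemma gadget_edge_outside_base:
  assumes j: "j < s" and i: "i < r" "i' < r" and H: "{\<sigma> j i, \<sigma> j i'} \<in> snd H"
    and ends: "en i j \<in> fst (path_graph (fam i j))" "en i' j \<in> fst (path_graph (fam i' j))"
  shows "\<exists>u v. {u, v} \<in> snd (gadget fam H r s \<sigma>) \<and> u \<in> fst (gadget fam H r s \<sigma>) \<and>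
    v \<in> fst (gadget fam H r s \<sigma>) \<and> u \<notin> gadget_base fam s \<and> v \<notin> gadget_base fam s"
proof (intro exI conjI)
  let ?u = "glab fam i j (en i j)" and ?v = "glab fam i' j (en i' j)"
  have "{?u, ?v} \<in> H_copy j" using i H unfolding H_copy_def by blast
  then show "{?u, ?v} \<in> snd (gadget fam H r s \<sigma>)" using j unfolding edges_gadget by blast
  show "?u \<in> fst (gadget fam H r s \<sigma>)" "?v \<in> fst (gadget fam H r s \<sigma>)"
    using i j ends unfolding gadget_def fst_conv by blast+
  show "?u \<notin> gadget_base fam s" "?v \<notin> gadget_base fam s"
    using glab_in_gadget_base split_facts(4) i j by blast+
qed

end

lemma wf_graph_edges: "wf_graph F \<Longrightarrow> e \<in> snd F \<Longrightarrow> e \<subseteq> fst F"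
  unfolding wf_graph_def by auto

lemma sparse_graph_iso:
  assumes iso: "graph_iso F G f" and wf: "wf_graph F" and G: "sparse k S c (snd G)"
    and W: "\<And>x. x \<in> fst F \<Longrightarrow> x \<in> W \<Longrightarrow> f x \<in> S"
  shows "sparse k W c (snd F)"
proof (rule sparse_embed[OF G])
  have "\<Union>(snd F) \<subseteq> fst F" using wf_graph_edges[OF wf] by blast
  then show "inj_on f (\<Union>(snd F))"
    using iso unfolding graph_iso_def by (meson bij_betw_imp_inj_on inj_on_subset)
  show "image f ` snd F \<subseteq> snd G"
  proof
    fix e' assume "e' \<in> image f ` snd F"
    then obtain e where "e \<in> snd F" "e' = f ` e" by blast
    moreover obtain x y where "x \<in> fst F" "y \<in> fst F" "e = {x, y}"
      using wf \<open>e \<in> snd F\<close> unfolding wf_graph_def by blast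
    ultimately show "e' \<in> snd G" using iso unfolding graph_iso_def by auto
  qed
  show "f x \<in> S" if "x \<in> \<Union>(snd F)" "x \<in> W" for x
    using W that \<open>\<Union>(snd F) \<subseteq> fst F\<close> by blast
qed

lemma graph_iso_edge_preimage:
  assumes "graph_iso F G f" "{u, v} \<in> snd G" "u \<in> fst G" "v \<in> fst G"
  shows "\<exists>x\<in>fst F. \<exists>y\<in>fst F. f x = u \<and> f y = v \<and> {x, y} \<in> snd F"
proof -
  have "f ` fst F = fst G" using assms(1) unfolding graph_iso_def bij_betw_def by blast
  then obtain x y where xy: "x \<in> fst F" "y \<in> fst F" "f x = u" "f y = v"
    using assms(3,4) by (metis imageE)
  then have "{x, y} \<in> snd F" using assms(1,2) unfolding graph_iso_def by simp
  with xy show ?thesis by blast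
qed

lemma gadget_split_exists:
  assumes "\<And>i j. i < r \<Longrightarrow> j < s \<Longrightarrow> \<exists>A B. path_split k (fam i j) A B"
    and "sparse k {} k (snd H)" "\<forall>j<s. bij_betw (\<sigma> j) {..<r} (fst H)" "0 < r"
  shows "\<exists>A B. gadget_split k r s fam H \<sigma> A B"
proof -
  obtain A B where "\<And>i j. i < r \<Longrightarrow> j < s \<Longrightarrow> path_split k (fam i j) (A i j) (B i j)"
    using assms(1) by metis
  then have "gadget_split k r s fam H \<sigma> A B"
    using assms(2-4) by unfold_locales (auto simp: bij_betw_def)
  then show ?thesis by blast
qed

context
  fixes k r s :: nat and fam :: "nat \<Rightarrow> nat \<Rightarrow> 'a rgraph list" and H :: "'b graph"
    and F :: "'v graph" and W :: "'v set"
  assumes gadget: "is_absorbing_gadget fam H r s F W"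
    and paths: "\<And>i j. i < r \<Longrightarrow> j < s \<Longrightarrow>
      (\<exists>A B. path_split k (fam i j) A B) \<and> path_end (fam i j) \<in> fst (path_graph (fam i j))"
    and sparse_H: "sparse k {} k (snd H)" and "0 < k" "0 < r"
begin

lemma absorbing_gadget_sparse: "sparse k {} k (snd F) \<and> sparse k W 1 (snd F)"
proof -
  obtain \<sigma> f where \<sigma>: "\<forall>j<s. bij_betw (\<sigma> j) {..<r} (fst H)" and iso: "graph_iso F (gadget fam H r s \<sigma>) f"
    and base: "f ` W = gadget_base fam s" and wf: "wf_graph F"
    using gadget unfolding is_absorbing_gadget_def by blast
  obtain A B where "gadget_split k r s fam H \<sigma> A B"
    using gadget_split_exists[OF _ sparse_H \<sigma> \<open>0 < r\<close>] paths by blast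
  then interpret gadget_split k r s fam H \<sigma> A B .
  have "sparse k {} k (snd F)" using sparse_gadget(1)[OF \<open>0 < k\<close>] by (rule sparse_graph_iso[OF iso wf]) simp
  moreover have "sparse k W 1 (snd F)"
    using sparse_gadget(2)[OF \<open>0 < k\<close>] by (rule sparse_graph_iso[OF iso wf]) (use base in blast)
  ultimately show ?thesis ..
qed

lemma absorbing_gadget_edge_avoiding_base:
  assumes "0 < s" and H: "{a, b} \<in> snd H" "a \<in> fst H" "b \<in> fst H"
  shows "\<exists>e\<in>snd F. e \<inter> W = {}"
proof -
  obtain \<sigma> f where \<sigma>: "\<forall>j<s. bij_betw (\<sigma> j) {..<r} (fst H)" and iso: "graph_iso F (gadget fam H r s \<sigma>) f"
    and base: "f ` W = gadget_base fam s"
    using gadget unfolding is_absorbing_gadget_def by blast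
  obtain A B where "gadget_split k r s fam H \<sigma> A B"
    using gadget_split_exists[OF _ sparse_H \<sigma> \<open>0 < r\<close>] paths by blast
  then interpret gadget_split k r s fam H \<sigma> A B .
  have "\<sigma> 0 ` {..<r} = fst H" using \<sigma> \<open>0 < s\<close> by (simp add: bij_betw_def)
  then have a: "a \<in> \<sigma> 0 ` {..<r}" and b: "b \<in> \<sigma> 0 ` {..<r}" using H(2,3) by simp_all
  from a obtain i where "i < r" "\<sigma> 0 i = a" by auto
  moreover from b obtain i' where "i' < r" "\<sigma> 0 i' = b" by auto
  ultimately have i: "i < r" "i' < r" "{\<sigma> 0 i, \<sigma> 0 i'} \<in> snd H" using H(1) by simp_all
  have "\<exists>u v. {u, v} \<in> snd (gadget fam H r s \<sigma>) \<and> u \<in> fst (gadget fam H r s \<sigma>) \<and>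
      v \<in> fst (gadget fam H r s \<sigma>) \<and> u \<notin> gadget_base fam s \<and> v \<notin> gadget_base fam s"
    by (rule gadget_edge_outside_base[OF \<open>0 < s\<close> i]) (use paths i(1,2) \<open>0 < s\<close> in simp_all)
  then obtain u v where uv: "{u, v} \<in> snd (gadget fam H r s \<sigma>)" "u \<in> fst (gadget fam H r s \<sigma>)"
    "v \<in> fst (gadget fam H r s \<sigma>)" "u \<notin> gadget_base fam s" "v \<notin> gadget_base fam s"
    by blast
  obtain x y where xy: "{x, y} \<in> snd F" "f x = u" "f y = v"
    using graph_iso_edge_preimage[OF iso uv(1-3)] by blast
  have "z \<notin> W" if "f z \<notin> gadget_base fam s" for z using that base by blast
  then have "{x, y} \<inter> W = {}" using xy(2,3) uv(4,5) by auto
  with xy(1) show ?thesis by blast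
qed

lemma absorbing_gadget_Phi_bounds:
  fixes n :: nat and C p :: real
  assumes "0 < s" "{a, b} \<in> snd H" "a \<in> fst H" "b \<in> fst H"
    and "1 \<le> C" "p \<ge> C * real n powr (- 2 / real k)"
  shows "Phi0 n p (delete_vertices F W) \<ge> C * real n \<and> Phi n p F W \<ge> C * real n powr (1 / real k)"
proof
  have wf: "wf_graph F" using gadget unfolding is_absorbing_gadget_def by blast
  then have fin: "finite (fst F)" and edges: "\<forall>e\<in>snd F. e \<subseteq> fst F"
    using wf_graph_edges by (auto simp: wf_graph_def)
  let ?F' = "delete_vertices F W"
  have "sparse k {} k (snd ?F')"
    using absorbing_gadget_sparse by (auto simp: delete_vertices_def intro: sparse_subset)
  moreover have "snd ?F' \<noteq> {}"
    using absorbing_gadget_edge_avoiding_base[OF assms(1-4)] by (auto simp: delete_vertices_def)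
  ultimately have "Phi0 n p ?F' \<ge> C * real n powr (real k / real k)"
    using fin edges \<open>0 < k\<close> assms(5,6)
    by (intro Phi_lower_bound) (auto simp: delete_vertices_def)
  then show "Phi0 n p ?F' \<ge> C * real n" using \<open>0 < k\<close> by simp
  have "snd F \<noteq> {}" using absorbing_gadget_edge_avoiding_base[OF assms(1-4)] by blast
  then show "Phi n p F W \<ge> C * real n powr (1 / real k)"
    using Phi_lower_bound[of k W 1 F] absorbing_gadget_sparse fin edges \<open>0 < k\<close> assms(5,6) by simp
qed

end

theorem lemma6p16:
  fixes k r s n :: nat and C p :: real
    and fam :: "nat \<Rightarrow> nat \<Rightarrow> (nat \<times> nat) rgraph list"
    and F :: "'v graph" and W :: "'v set"
  assumes "2 \<le> k" "k \<le> r" "1 \<le> s" "C > 1"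
    and "p \<ge> C * real n powr (- 2 / real k)"
    and "k dvd r \<Longrightarrow> fam \<in> fam_set (vecH1 r k) r s"
    and "\<not> k dvd r \<Longrightarrow> 2 * k < r \<Longrightarrow> fam \<in> fam_set (vecH2 r k) r s"
    and "r < 2 * k \<Longrightarrow> k < r \<Longrightarrow> fam \<in> fam_set (vecH3 r k) r s"
    and "is_absorbing_gadget (\<lambda>i j. map rcompl (fam i j)) (gcompl (Hdet r k)) r s F W"
  shows "Phi0 n p (delete_vertices F W) \<ge> C * real n
       \<and> Phi n p F W \<ge> C * real n powr (1 / real k)"
proof (rule absorbing_gadget_Phi_bounds)
  show "is_absorbing_gadget (\<lambda>i j. map rcompl (fam i j)) (gcompl (Hdet r k)) r s F W" by fact
  show "(\<exists>A B. path_split k (map rcompl (fam i j)) A B) \<and>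
      path_end (map rcompl (fam i j)) \<in> fst (path_graph (map rcompl (fam i j)))"
    if "i < r" "j < s" for i j
    using that assms(1,2,6-8) by (intro path_split_family) (auto simp: fam_set_def)
  show "sparse k {} k (snd (gcompl (Hdet r k)))" using assms(1,2) by (intro sparse_gcompl_Hdet) simp_all
  show "{(0, 0), (0, 1)} \<in> snd (gcompl (Hdet r k))" "(0, 0) \<in> fst (gcompl (Hdet r k))"
    "(0, 1) \<in> fst (gcompl (Hdet r k))"
    using edge_gcompl_Hdet[OF assms(1,2)] by simp_all
qed (use assms(1-5) in simp_all)

end
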